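(* Let $p$ be an odd prime, $\zeta$ a primitive $p$-th root of unity, $K=\mathbf{Q}_p(\zeta)$, $K^+=\mathbf{Q}_p(\zeta+\zeta^{-1})$, $\mathfrak{o}=\mathbf{Z}_p[\zeta]$, $\pi=1-\zeta$, and regard $\mathbf{Z}[\zeta]\subset\mathfrak{o}$ via $\zeta\mapsto\zeta$. Let $u\in\mathbf{Z}[\zeta]^\times$ be a global unit such that $u\equiv a\pmod{\pi^2}$ and $N_{K|K^+}(u)\equiv b\pmod{p}$ for some $a,b\in\mathbf{Z}_p^\times$. Then $u\in\mathfrak{o}^{\times p}$. *)

theory Defs
  imports "HOL-Computational_Algebra.Polynomial" "HOL-Number_Theory.Cong"
begin

text \<open>Z[zeta] is modelled as Z[X]/(Phi_p), Phi_p = 1 + X + ... + X^(p-1) the p-th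
cyclotomic polynomial (p prime); an element is represented by an integer polynomial.\<close>

definition cyclo :: "nat \<Rightarrow> int poly" where
  "cyclo p = (\<Sum>i<p. monom 1 i)"

text \<open>Congruence in Z[zeta] modulo the ideal generated by the integer m,
i.e. equality in Z[X]/(Phi_p, m).  For m = 0 this is equality in Z[zeta].\<close>
definition zcong :: "nat \<Rightarrow> int \<Rightarrow> int poly \<Rightarrow> int poly \<Rightarrow> bool" where
  "zcong p m f g \<longleftrightarrow> (\<exists>q r. f - g = q * cyclo p + smult m r)"

definition zeq :: "nat \<Rightarrow> int poly \<Rightarrow> int poly \<Rightarrow> bool" where
  "zeq p f g \<longleftrightarrow> zcong p 0 f g"

definition zunit :: "nat \<Rightarrow> int poly \<Rightarrow> bool" where
  "zunit p u \<longleftrightarrow> (\<exists>v. zeq p (u * v) 1)"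

definition piz :: "int poly" where
  "piz = [:1, -1:]"

text \<open>Complex conjugation zeta |-> zeta^(-1) = zeta^(p-1), and the norm N_{K|K+}.\<close>
definition conjz :: "nat \<Rightarrow> int poly \<Rightarrow> int poly" where
  "conjz p u = pcompose u (monom 1 (p - 1))"

definition normz :: "nat \<Rightarrow> int poly \<Rightarrow> int poly" where
  "normz p u = u * conjz p u"

text \<open>Z_p as the inverse limit of Z/p^n: compatible sequences, a n read mod p^n.\<close>
definition Zp_elem :: "nat \<Rightarrow> (nat \<Rightarrow> int) \<Rightarrow> bool" where
  "Zp_elem p a \<longleftrightarrow> (\<forall>n. [a (Suc n) = a n] (mod (int p ^ n)))"

definition Zp_unit :: "nat \<Rightarrow> (nat \<Rightarrow> int) \<Rightarrow> bool" where
  "Zp_unit p a \<longleftrightarrow> Zp_elem p a \<and> (\<exists>b. Zp_elem p b \<and> (\<forall>n. [a n * b n = 1] (mod (int p ^ n))))"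

text \<open>o = Z_p[zeta] as the inverse limit of Z[zeta]/p^n: compatible sequences,
x n read in Z[zeta]/(p^n).  Ring operations are componentwise; Z[zeta] embeds
via constant sequences, Z_p via constant polynomials.\<close>
definition o_elem :: "nat \<Rightarrow> (nat \<Rightarrow> int poly) \<Rightarrow> bool" where
  "o_elem p x \<longleftrightarrow> (\<forall>n. zcong p (int p ^ n) (x (Suc n)) (x n))"

definition o_eq :: "nat \<Rightarrow> (nat \<Rightarrow> int poly) \<Rightarrow> (nat \<Rightarrow> int poly) \<Rightarrow> bool" where
  "o_eq p x y \<longleftrightarrow> (\<forall>n. zcong p (int p ^ n) (x n) (y n))"

definition o_unit :: "nat \<Rightarrow> (nat \<Rightarrow> int poly) \<Rightarrow> bool" where
  "o_unit p x \<longleftrightarrow> o_elem p x \<and> (\<exists>z. o_elem p z \<and> o_eq p (\<lambda>n. x n * z n) (\<lambda>n. 1))"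

definition o_cong :: "nat \<Rightarrow> int poly \<Rightarrow> (nat \<Rightarrow> int poly) \<Rightarrow> (nat \<Rightarrow> int poly) \<Rightarrow> bool" where
  "o_cong p d x y \<longleftrightarrow> (\<exists>z. o_elem p z \<and> o_eq p (\<lambda>n. x n - y n) (\<lambda>n. d * z n))"

definition o_pth_power_unit :: "nat \<Rightarrow> (nat \<Rightarrow> int poly) \<Rightarrow> bool" where
  "o_pth_power_unit p x \<longleftrightarrow> (\<exists>y. o_unit p y \<and> o_eq p (\<lambda>n. y n ^ p) x)"

end

theory Submission
  imports Defs
begin

text \<open>
  Two elements are equal iff they agree under the
  p - 1 complex embeddings X \<mapsto> zeta^k (0 < k < p); this makes archimedean arguments
  available.  The proof follows the classical route:
  (1) Kummer's lemma: w = u / conj(u) has all conjugates of absolute value 1, so it is a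
      root of unity (only finitely many integral elements have this property).  Since
      w = 1 (mod pi^2) and taking powers never makes the pi-adic valuation of w - 1
      infinite, w = 1: u is real.
  (2) u real and u^2 = N_{K|K+}(u) = b (mod p) force u = e (mod pi^(p+1)) for an
      integer e prime to p.
  (3) The absolute norm of u is +1 or -1 and is = e^(p-1) (mod pi^(p+1)), hence (mod p^2);
      with Fermat's little theorem e^(p-1) = 1 (mod p^2), so e^p = u (mod pi^(p+1)).
  (4) Hensel: a solution of y^p = u (mod pi^k) with k \<ge> p + 1 lifts to a solution
      modulo pi^(k+1).  The coherent sequence of solutions is a unit of o with p-th power u.
\<close>

definition evalc :: "complex \<Rightarrow> int poly \<Rightarrow> complex" where
  "evalc z f = poly (map_poly of_int f) z"

lemma evalc_0[simp]: "evalc z 0 = 0" by (simp add: evalc_def)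

lemma evalc_pCons[simp]: "evalc z (pCons a f) = of_int a + z * evalc z f"
  by (simp add: evalc_def map_poly_pCons)

lemma evalc_const[simp]: "evalc z [:a:] = of_int a"
  by simp

lemma evalc_1[simp]: "evalc z 1 = 1"
  by (simp add: one_pCons)

lemma evalc_add[simp]: "evalc z (f + g) = evalc z f + evalc z g"
  by (induction f g rule: poly_induct2) (auto simp: algebra_simps)

lemma evalc_uminus[simp]: "evalc z (- f) = - evalc z f"
  by (induction f) (auto simp: algebra_simps)

lemma evalc_diff[simp]: "evalc z (f - g) = evalc z f - evalc z g"
  using evalc_add[of z f "-g"] by simp

lemma evalc_smult[simp]: "evalc z (smult a f) = of_int a * evalc z f"
  by (induction f) (auto simp: algebra_simps)

lemma evalc_mult[simp]: "evalc z (f * g) = evalc z f * evalc z g"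
  by (induction f) (auto simp: algebra_simps mult_pCons_left)

lemma evalc_power[simp]: "evalc z (f ^ n) = evalc z f ^ n"
  by (induction n) auto

lemma evalc_sum: "evalc z (sum f A) = (\<Sum>i\<in>A. evalc z (f i))"
  by (induction A rule: infinite_finite_induct) auto

lemma evalc_prod: "evalc z (prod f A) = (\<Prod>i\<in>A. evalc z (f i))"
  by (induction A rule: infinite_finite_induct) auto

lemma evalc_monom[simp]: "evalc z (monom a n) = of_int a * z ^ n"
  by (simp add: evalc_def map_poly_monom poly_monom)

lemma evalc_of_nat[simp]: "evalc z (of_nat n) = of_nat n"
  by (induction n) auto

lemma evalc_of_int[simp]: "evalc z (of_int n) = of_int n"
  by (simp add: of_int_poly)

lemma evalc_pcompose: "evalc z (pcompose f g) = evalc (evalc z g) f"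
  by (induction f) (auto simp: pcompose_pCons)

lemma evalc_cnj: "cnj (evalc z f) = evalc (cnj z) f"
  by (induction f) auto

definition cong_z :: "nat \<Rightarrow> int poly \<Rightarrow> int poly \<Rightarrow> int poly \<Rightarrow> bool" where
  "cong_z p d x y \<longleftrightarrow> (\<exists>c q. x - y = d * c + q * cyclo p)"

lemma cong_z_refl[simp]: "cong_z p d x x" unfolding cong_z_def by (rule exI[of _ 0], rule exI[of _ 0]) simp

lemma cong_z_sym: "cong_z p d x y \<Longrightarrow> cong_z p d y x"
proof -
  assume "cong_z p d x y"
  then obtain c q where "x - y = d * c + q * cyclo p" unfolding cong_z_def by blast
  then have "y - x = d * (-c) + (-q) * cyclo p" by (simp add: algebra_simps)
  then show ?thesis unfolding cong_z_def by blast
qed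

lemma cong_z_trans: "cong_z p d x y \<Longrightarrow> cong_z p d y z \<Longrightarrow> cong_z p d x z"
proof -
  assume "cong_z p d x y" "cong_z p d y z"
  then obtain c q c' q' where "x - y = d * c + q * cyclo p" "y - z = d * c' + q' * cyclo p"
    unfolding cong_z_def by blast
  then have "x - z = d * (c + c') + (q + q') * cyclo p" by (simp add: algebra_simps)
  then show ?thesis unfolding cong_z_def by blast
qed

lemma cong_z_add: "cong_z p d x y \<Longrightarrow> cong_z p d x' y' \<Longrightarrow> cong_z p d (x + x') (y + y')"
proof -
  assume "cong_z p d x y" "cong_z p d x' y'"
  then obtain c q c' q' where "x - y = d * c + q * cyclo p" "x' - y' = d * c' + q' * cyclo p"
    unfolding cong_z_def by blast
  then have "(x + x') - (y + y') = d * (c + c') + (q + q') * cyclo p" by (simp add: algebra_simps)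
  then show ?thesis unfolding cong_z_def by blast
qed

lemma cong_z_uminus: "cong_z p d x y \<Longrightarrow> cong_z p d (-x) (-y)"
proof -
  assume "cong_z p d x y"
  then obtain c q where "x - y = d * c + q * cyclo p" unfolding cong_z_def by blast
  then have "(-x) - (-y) = d * (-c) + (-q) * cyclo p" by (simp add: algebra_simps)
  then show ?thesis unfolding cong_z_def by blast
qed

lemma cong_z_diff: "cong_z p d x y \<Longrightarrow> cong_z p d x' y' \<Longrightarrow> cong_z p d (x - x') (y - y')"
  using cong_z_add[of p d x y "-x'" "-y'"] cong_z_uminus by simp

lemma cong_z_mult_left: "cong_z p d x y \<Longrightarrow> cong_z p d (z * x) (z * y)"
proof -
  assume "cong_z p d x y"
  then obtain c q where "x - y = d * c + q * cyclo p" unfolding cong_z_def by blast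
  then have "z * x - z * y = d * (z * c) + (z * q) * cyclo p"
    by (simp add: algebra_simps flip: right_diff_distrib)
  then show ?thesis unfolding cong_z_def by blast
qed

lemma cong_z_mult: "cong_z p d x y \<Longrightarrow> cong_z p d x' y' \<Longrightarrow> cong_z p d (x * x') (y * y')"
  by (metis cong_z_mult_left cong_z_trans mult.commute)

lemma cong_z_power: "cong_z p d x y \<Longrightarrow> cong_z p d (x ^ n) (y ^ n)"
  by (induction n) (auto intro: cong_z_mult)

lemma cong_z_prod: "(\<And>i. i \<in> A \<Longrightarrow> cong_z p d (f i) (g i)) \<Longrightarrow> cong_z p d (prod f A) (prod g A)"
  by (induction A rule: infinite_finite_induct) (auto intro: cong_z_mult)

lemma cong_z_multiple[simp]: "cong_z p d (d * c) 0"
  unfolding cong_z_def by (rule exI[of _ c], rule exI[of _ 0]) simp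

lemma cong_z_cyclo[simp]: "cong_z p d (c * cyclo p) 0"
  unfolding cong_z_def by (rule exI[of _ 0], rule exI[of _ c]) simp

lemma cong_z_iff_0: "cong_z p d x y \<longleftrightarrow> cong_z p d (x - y) 0"
  unfolding cong_z_def by simp

lemma cong_z_mono: "cong_z p (d * e) x y \<Longrightarrow> cong_z p d x y"
  unfolding cong_z_def by (metis mult.assoc)

lemma cong_z_dvd: "d dvd e \<Longrightarrow> cong_z p e x y \<Longrightarrow> cong_z p d x y"
  by (metis dvd_def cong_z_mono)

lemma cong_z_0_imp: "cong_z p 0 x y \<Longrightarrow> cong_z p d x y"
  using cong_z_dvd[of d 0] by simp

lemma cong_z_modulus: "cong_z p 0 d d' \<Longrightarrow> cong_z p d x y \<Longrightarrow> cong_z p d' x y"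
proof -
  assume "cong_z p 0 d d'" "cong_z p d x y"
  then obtain c q c' q' where "d - d' = q * cyclo p" "x - y = d * c' + q' * cyclo p"
    unfolding cong_z_def by auto
  then have "x - y = d' * c' + (q' + q * c') * cyclo p" by (simp add: algebra_simps)
  then show ?thesis unfolding cong_z_def by blast
qed

lemma zeq_cong_z: "zeq p x y \<longleftrightarrow> cong_z p 0 x y"
  unfolding zeq_def zcong_def cong_z_def by auto

lemma zcong_cong_z: "zcong p m x y \<longleftrightarrow> cong_z p [:m:] x y"
  unfolding zcong_def cong_z_def by (auto simp: ac_simps)

lemma cong_z_one[simp]: "cong_z p 1 x y"
  unfolding cong_z_def by (rule exI[of _ "x - y"], rule exI[of _ 0]) simp

lemma cong_z_congr0: "cong_z p d x 0 \<Longrightarrow> cong_z p 0 x x' \<Longrightarrow> cong_z p d x' 0"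
  using cong_z_0_imp cong_z_sym cong_z_trans by blast

lemma cong_z_0_iff_multiple: "cong_z p d x 0 \<longleftrightarrow> (\<exists>c. cong_z p 0 x (d * c))"
proof
  assume "cong_z p d x 0"
  then obtain c q where "x - 0 = d * c + q * cyclo p" unfolding cong_z_def by blast
  then have "x - d * c = 0 * 0 + q * cyclo p" by simp
  then show "\<exists>c. cong_z p 0 x (d * c)" unfolding cong_z_def by blast
next
  assume "\<exists>c. cong_z p 0 x (d * c)"
  then obtain c c' q where "x - d * c = 0 * c' + q * cyclo p" unfolding cong_z_def by blast
  then have "x - 0 = d * c + q * cyclo p" by (simp add: algebra_simps)
  then show "cong_z p d x 0" unfolding cong_z_def by blast
qed

lemma cong_z_modulus_dvd: "cong_z p d e 0 \<Longrightarrow> cong_z p e x y \<Longrightarrow> cong_z p d x y"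
proof -
  assume "cong_z p d e 0" "cong_z p e x y"
  then obtain c q c' q' where "e = d * c + q * cyclo p" "x - y = e * c' + q' * cyclo p"
    unfolding cong_z_def by auto
  then have "x - y = d * (c * c') + (q' + q * c') * cyclo p" by (simp add: algebra_simps)
  then show ?thesis unfolding cong_z_def by blast
qed

lemma cong_z_mult0: "cong_z p d x 0 \<Longrightarrow> cong_z p e y 0 \<Longrightarrow> cong_z p (d * e) (x * y) 0"
proof -
  assume "cong_z p d x 0" "cong_z p e y 0"
  then obtain c q c' q' where "x = d * c + q * cyclo p" "y = e * c' + q' * cyclo p"
    unfolding cong_z_def by auto
  then have "x * y - 0 = (d * e) * (c * c') + (q * (e * c') + d * c * q' + q * q' * cyclo p) * cyclo p"
    by (simp add: algebra_simps)
  then show ?thesis unfolding cong_z_def by blast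
qed

lemma cong_z_pow0: "cong_z p d x 0 \<Longrightarrow> cong_z p (d ^ n) (x ^ n) 0"
  by (induction n) (auto intro: cong_z_mult0)

lemma cong_z_times: "cong_z p d x 0 \<Longrightarrow> cong_z p d (x * z) 0"
  using cong_z_mult[of p d x 0 z z] by simp

lemma binom_p:
  fixes z :: "'a::comm_ring_1"
  assumes "prime p" "p \<ge> 3"
  shows "\<exists>W. (1 + z) ^ p = 1 + of_nat p * z + of_nat p * z^2 * W + z ^ p"
proof -
  define W where "W = (\<Sum>k\<in>{2..<p}. of_nat ((p choose k) div p) * z ^ (k - 2))"
  have "(1 + z) ^ p = (z + 1) ^ p" by (simp add: add.commute)
  also have "\<dots> = (\<Sum>k\<le>p. of_nat (p choose k) * z ^ k)" by (simp add: binomial_ring)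
  also have "{..p} = insert 0 (insert 1 (insert p {2..<p}))" using assms by auto
  also have "(\<Sum>k\<in>insert 0 (insert 1 (insert p {2..<p})). of_nat (p choose k) * z ^ k)
      = 1 + (of_nat p * z + (z ^ p + (\<Sum>k\<in>{2..<p}. of_nat (p choose k) * z ^ k)))"
    using assms by (simp add: sum.insert)
  also have "(\<Sum>k\<in>{2..<p}. of_nat (p choose k) * z ^ k) = of_nat p * z^2 * W"
    unfolding W_def sum_distrib_left
  proof (rule sum.cong[OF refl])
    fix k assume k: "k \<in> {2..<p}"
    then have "p dvd (p choose k)" using assms by (intro dvd_choose_prime) auto
    then have "p choose k = p * ((p choose k) div p)" by simp
    moreover have "z ^ k = z^2 * z ^ (k - 2)"
    proof -
      have "k = 2 + (k - 2)" using k by auto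
      then show ?thesis by (metis power_add)
    qed
    ultimately show "of_nat (p choose k) * z ^ k = of_nat p * z\<^sup>2 * (of_nat ((p choose k) div p) * z ^ (k - 2))"
      by (metis (no_types, lifting) mult.assoc mult.left_commute of_nat_mult)
  qed
  finally show ?thesis by (auto simp: algebra_simps)
qed

lemma int_dvd_all_powers_eq_0:
  fixes c :: int and q :: nat
  assumes "q \<ge> 2" and dvd: "\<And>k. int q ^ k dvd c"
  shows "c = 0"
proof (rule ccontr)
  assume "c \<noteq> 0"
  have "\<bar>c\<bar> < 2 ^ nat \<bar>c\<bar>"
  proof -
    have "nat \<bar>c\<bar> < 2 ^ nat \<bar>c\<bar>" by (rule less_exp)
    then have "int (nat \<bar>c\<bar>) < int (2 ^ nat \<bar>c\<bar>)" by linarith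
    then show ?thesis by simp
  qed
  also have "(2::int) ^ nat \<bar>c\<bar> \<le> int q ^ nat \<bar>c\<bar>"
    using assms(1) by (intro power_mono) auto
  finally show False using dvd_imp_le_int[OF \<open>c \<noteq> 0\<close> dvd[of "nat \<bar>c\<bar>"]]
    by simp
qed

text \<open>From now on p is a fixed odd prime; zeta = exp(2 pi i / p) is the first complex
  embedding of the root of unity X, and X \<mapsto> zeta^k (0 < k < p) are all of them.\<close>

locale cyclotomic = fixes p :: nat assumes pr: "prime p" and od: "odd p"
begin

lemma p_ge3: "p \<ge> 3"
proof -
  have "p \<ge> 2" using pr prime_ge_2_nat by blast
  moreover have "p \<noteq> 2" using od by auto
  ultimately show ?thesis by simp
qed

lemma p_gt0[simp]: "p > 0" using p_ge3 by simp

abbreviation Phi :: "int poly" where "Phi \<equiv> cyclo p"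

abbreviation X :: "int poly" where "X \<equiv> [:0,1:]"

lemma monom_X: "monom (1::int) i = X ^ i"
  by (induction i) (auto simp: monom_Suc monom_0 one_pCons)

lemma cyclo_alt: "Phi = (\<Sum>i<p. X ^ i)"
  unfolding cyclo_def by (simp add: monom_X)

lemma cyclo_mul: "(X - 1) * Phi = X ^ p - 1"
  unfolding cyclo_alt by (simp add: power_diff_1_eq)

lemma coeff_cyclo: "coeff Phi k = (if k < p then 1 else 0)"
  unfolding cyclo_def by (simp add: coeff_sum coeff_monom)

lemma degree_cyclo: "degree Phi = p - 1"
  by (rule antisym) (auto intro!: degree_le le_degree simp: coeff_cyclo)

lemma lead_cyclo: "lead_coeff Phi = 1"
  by (simp add: degree_cyclo coeff_cyclo)

lemma cyclo_ne0: "Phi \<noteq> 0" using lead_cyclo by auto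

lemma poly_cyclo_1: "poly Phi 1 = int p"
  unfolding cyclo_def by (simp add: poly_sum poly_monom)

definition zeta :: complex where "zeta = cis (2 * pi / p)"

lemma zeta_pow: "zeta ^ k = cis (2 * pi * k / p)"
  unfolding zeta_def by (simp add: DeMoivre mult_ac)

lemma zeta_p: "zeta ^ p = 1"
  unfolding zeta_pow by simp

lemma zeta_pow_mod: "zeta ^ k = zeta ^ (k mod p)"
proof -
  have "zeta ^ k = zeta ^ (p * (k div p) + k mod p)" by simp
  also have "\<dots> = (zeta ^ p) ^ (k div p) * zeta ^ (k mod p)"
    by (simp only: power_add power_mult)
  finally show ?thesis by (simp add: zeta_p)
qed

lemma zeta_inj: "a < p \<Longrightarrow> b < p \<Longrightarrow> zeta ^ a = zeta ^ b \<Longrightarrow> a = b"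
  using bij_betw_roots_unity[OF p_gt0] unfolding bij_betw_def inj_on_def zeta_pow by auto

lemma zeta_pow_eq: "zeta ^ a = zeta ^ b \<longleftrightarrow> a mod p = b mod p"
  using zeta_inj[of "a mod p" "b mod p"] zeta_pow_mod[of a] zeta_pow_mod[of b] by auto

lemma zeta_pow_eq1: "zeta ^ k = 1 \<longleftrightarrow> p dvd k"
  using zeta_pow_eq[of k 0] by (simp add: dvd_eq_mod_eq_0)

lemma norm_zeta[simp]: "norm (zeta ^ k) = 1"
  unfolding zeta_pow by simp

lemma zeta_ne0[simp]: "zeta ^ k \<noteq> 0"
  using norm_zeta[of k] by (metis norm_zero zero_neq_one)

lemma cnj_zeta: "cnj (zeta ^ k) = zeta ^ (k * (p - 1))"
proof -
  have "zeta ^ (k * (p - 1)) * zeta ^ k = 1"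
    using p_ge3 by (simp flip: power_add) (simp add: zeta_pow_eq1 algebra_simps)
  moreover have "cnj (zeta ^ k) * zeta ^ k = 1"
    by (metis complex_norm_square norm_zeta of_real_1 power_one mult.commute)
  ultimately show ?thesis by (metis zeta_ne0 mult_right_cancel)
qed

lemma evalc_cyclo: "\<not> p dvd k \<Longrightarrow> evalc (zeta ^ k) Phi = 0"
proof -
  assume "\<not> p dvd k"
  then have ne: "zeta ^ k \<noteq> 1" by (simp add: zeta_pow_eq1)
  have "evalc (zeta ^ k) Phi = (\<Sum>i<p. (zeta ^ k) ^ i)"
    unfolding cyclo_alt by (simp add: evalc_sum)
  also have "\<dots> = ((zeta ^ k) ^ p - 1) / (zeta ^ k - 1)" using ne by (simp add: geometric_sum)
  also have "(zeta ^ k) ^ p = 1" by (simp flip: power_mult) (simp add: zeta_pow_eq1)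
  finally show ?thesis by simp
qed

lemma cong_z0_evalc: "cong_z p 0 f g \<Longrightarrow> \<not> p dvd k \<Longrightarrow> evalc (zeta ^ k) f = evalc (zeta ^ k) g"
proof -
  assume "cong_z p 0 f g" "\<not> p dvd k"
  then obtain q where "f - g = q * Phi" unfolding cong_z_def by auto
  then have "evalc (zeta ^ k) (f - g) = 0"
    using evalc_cyclo[OF \<open>\<not> p dvd k\<close>] by simp
  then show ?thesis by simp
qed

lemma reduce: "\<exists>q r. f = q * Phi + r \<and> degree r < p - 1"
proof -
  obtain q r where qr: "pseudo_divmod f Phi = (q, r)" by fastforce
  from pseudo_divmod[OF cyclo_ne0 qr] have "f = Phi * q + r" "r = 0 \<or> degree r < p - 1"
    using lead_cyclo by (auto simp: degree_cyclo)
  moreover have "degree r < p - 1"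
    using \<open>r = 0 \<or> degree r < p - 1\<close> p_ge3 by auto
  ultimately show ?thesis by (metis mult.commute)
qed

lemma poly_vanishing_at_zeta_powers:
  fixes R :: "complex poly"
  assumes "degree R < p - 1" and "\<And>k. 0 < k \<Longrightarrow> k < p \<Longrightarrow> poly R (zeta ^ k) = 0"
  shows "R = 0"
proof (rule ccontr)
  assume R0: "R \<noteq> 0"
  have "(\<lambda>k. zeta ^ k) ` {1..<p} \<subseteq> {x. poly R x = 0}" using assms(2) by auto
  moreover have "card ((\<lambda>k. zeta ^ k) ` {1..<p}) = p - 1"
    by (subst card_image) (auto simp: inj_on_def intro: zeta_inj)
  ultimately have "p - 1 \<le> card {x. poly R x = 0}"
    by (metis card_mono poly_roots_finite R0)
  also have "\<dots> \<le> degree R" by (rule card_poly_roots_bound[OF R0])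
  finally show False using assms(1) by simp
qed

lemma evalc_cong_z0:
  assumes "\<And>k. 0 < k \<Longrightarrow> k < p \<Longrightarrow> evalc (zeta ^ k) f = evalc (zeta ^ k) g"
  shows "cong_z p 0 f g"
proof -
  obtain q r where qr: "f - g = q * Phi + r" "degree r < p - 1" using reduce by blast
  have "map_poly (of_int :: int \<Rightarrow> complex) r = 0"
  proof (rule poly_vanishing_at_zeta_powers)
    show "degree (map_poly (of_int :: int \<Rightarrow> complex) r) < p - 1"
      using qr(2) by (simp add: degree_map_poly)
  next
    fix k :: nat assume k: "0 < k" "k < p"
    then have nd: "\<not> p dvd k" by (auto dest: dvd_imp_le)
    have "evalc (zeta ^ k) (f - g) = 0" using assms[OF k] by simp
    then have "evalc (zeta ^ k) r = 0" unfolding qr(1) using evalc_cyclo[OF nd] by simp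
    then show "poly (map_poly of_int r) (zeta ^ k) = 0" by (simp add: evalc_def)
  qed
  then have "r = 0" by (simp add: map_poly_eq_0_iff)
  then show ?thesis unfolding cong_z_def using qr by (metis add_0 add.right_neutral mult_zero_right)
qed

lemma cong_z0_iff_evalc: "cong_z p 0 f g \<longleftrightarrow> (\<forall>k. 0 < k \<and> k < p \<longrightarrow> evalc (zeta ^ k) f = evalc (zeta ^ k) g)"
  using cong_z0_evalc evalc_cong_z0 by (meson dvd_imp_le linorder_not_le)

text \<open>The prime pi = 1 - zeta.  Congruence modulo pi is divisibility of the value at
  X = 1 by p, so (pi) is a prime ideal with residue field F_p.\<close>

lemma poly_piz[simp]: "poly piz 1 = 0" by (simp add: piz_def)

lemma piz_ne0[simp]: "piz \<noteq> 0" by (simp add: piz_def)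

lemma piz_alt: "piz = 1 - X" by (simp add: piz_def one_pCons)

lemma cong_z_pi_const: "cong_z p piz x [:poly x 1:]"
proof -
  have "poly (x - [:poly x 1:]) 1 = 0" by simp
  then obtain g where g: "x - [:poly x 1:] = [:-1, 1:] * g"
    using poly_eq_0_iff_dvd by (metis dvd_def)
  have "[:-1, 1:] = - piz" by (simp add: piz_def)
  then have "x - [:poly x 1:] = piz * (-g) + 0 * Phi" using g by simp
  then show ?thesis unfolding cong_z_def by blast
qed

lemma cong_z_pi_int: "cong_z p piz [:n:] 0 \<longleftrightarrow> int p dvd n"
proof
  assume "cong_z p piz [:n:] 0"
  then obtain c q where "[:n:] = piz * c + q * Phi" unfolding cong_z_def by auto
  then have "poly [:n:] 1 = poly q 1 * int p" by (simp add: poly_cyclo_1)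
  then show "int p dvd n" by simp
next
  assume "int p dvd n"
  then obtain m where m: "n = int p * m" by auto
  have "cong_z p piz Phi [:int p:]" using cong_z_pi_const[of Phi] by (simp add: poly_cyclo_1)
  then have "cong_z p piz (Phi * [:m:]) ([:int p:] * [:m:])" by (rule cong_z_mult) simp
  moreover have "cong_z p piz (Phi * [:m:]) 0" by (metis cong_z_cyclo mult.commute)
  moreover have "[:n:] = [:int p:] * [:m:]" using m by simp
  ultimately show "cong_z p piz [:n:] 0" by (metis cong_z_sym cong_z_trans)
qed

lemma cong_z_pi_iff: "cong_z p piz x 0 \<longleftrightarrow> int p dvd poly x 1"
  using cong_z_pi_const[of x] cong_z_pi_int[of "poly x 1"] cong_z_sym cong_z_trans by blast

lemma pi_prime: "cong_z p piz (x * y) 0 \<Longrightarrow> cong_z p piz x 0 \<or> cong_z p piz y 0"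
  unfolding cong_z_pi_iff using pr by (simp add: prime_dvd_mult_iff prime_nat_int_transfer)

lemma pi_cancel1: "cong_z p (piz * d) (piz * z) 0 \<Longrightarrow> cong_z p d z 0"
proof -
  assume "cong_z p (piz * d) (piz * z) 0"
  then obtain c q where e: "piz * z = piz * d * c + q * Phi" unfolding cong_z_def by auto
  have "poly (piz * z) 1 = poly (piz * d * c + q * Phi) 1" using e by simp
  then have "poly q 1 = 0" using p_gt0 by (simp add: poly_cyclo_1)
  then obtain g where g: "q = [:-1, 1:] * g" using poly_eq_0_iff_dvd by (metis dvd_def)
  have "[:-1, 1:] = - piz" by (simp add: piz_def)
  then have "piz * z = piz * (d * c - g * Phi)" using e g by (simp add: algebra_simps)
  then have "z - 0 = d * c + (-g) * Phi" by simp
  then show ?thesis unfolding cong_z_def by blast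
qed

lemma pi_cancel: "cong_z p (piz ^ a * d) (piz ^ a * z) 0 \<Longrightarrow> cong_z p d z 0"
  by (induction a) (auto simp: mult.assoc dest: pi_cancel1)

lemma pi_pow_mono: "a \<le> b \<Longrightarrow> cong_z p (piz ^ b) x y \<Longrightarrow> cong_z p (piz ^ a) x y"
  by (rule cong_z_dvd[of _ "piz ^ b"]) (simp_all add: le_imp_power_dvd)

lemma pi_unit_cancel:
  assumes "cong_z p (piz ^ k) (c * y) 0" "\<not> cong_z p piz c 0"
  shows "cong_z p (piz ^ k) y 0"
  using assms(1)
proof (induction k)
  case 0 then show ?case by simp
next
  case (Suc k)
  then have "cong_z p (piz ^ k) y 0" using pi_pow_mono[of k "Suc k"] by auto
  then obtain y' q where y: "y = piz ^ k * y' + q * Phi" unfolding cong_z_def by auto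
  have "c * y = piz ^ k * (c * y') + (c * q) * Phi" unfolding y by (simp add: algebra_simps)
  then have "cong_z p 0 (c * y) (piz ^ k * (c * y'))"
    unfolding cong_z_def by (metis add_diff_cancel_left' mult_zero_left add_0)
  then have "cong_z p (piz ^ k * piz) (piz ^ k * (c * y')) 0"
    using Suc.prems cong_z_congr0 by (simp add: mult.commute)
  then have "cong_z p piz (c * y') 0" by (rule pi_cancel)
  then have "cong_z p piz y' 0" using pi_prime assms(2) by blast
  then obtain y'' q' where "y' = piz * y'' + q' * Phi" unfolding cong_z_def by auto
  then have "y = piz ^ Suc k * y'' + (q + piz ^ k * q') * Phi"
    unfolding y by (simp add: algebra_simps)
  then show ?case unfolding cong_z_def by auto
qed

lemma int_p_dvd_2_times: "int p dvd 2 * c \<longleftrightarrow> int p dvd c"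
proof -
  have "prime (int p)" using pr by simp
  moreover have "\<not> int p dvd 2"
  proof
    assume "int p dvd 2"
    then have "int p \<le> 2" by (rule zdvd_imp_le) simp
    then show False using p_ge3 by simp
  qed
  ultimately show ?thesis by (auto simp: prime_dvd_mult_iff)
qed

text \<open>Evaluating Phi_p at X = 1 - pi gives Phi_p = p (1 - pi W) + pi^(p-1); hence
  p = pi^(p-1) * eps with a unit eps, and congruences modulo p^k and pi^((p-1) k) agree.\<close>

lemma cyclo_at_1_minus_pi: "\<exists>W. Phi = [:int p:] * (1 - piz * W) + piz ^ (p - 1)"
proof -
  define Y where "Y = X - 1"
  obtain W where W: "(1 + Y) ^ p = 1 + of_nat p * Y + of_nat p * Y^2 * W + Y ^ p"
    using binom_p[OF pr p_ge3] by blast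
  have Yne: "Y \<noteq> 0" unfolding Y_def by (simp add: one_pCons)
  have "Y ^ p = Y * Y ^ (p - 1)" using p_ge3 by (metis power_Suc Suc_pred' p_gt0)
  moreover have "Y * Phi = (1 + Y) ^ p - 1" unfolding Y_def using cyclo_mul by simp
  ultimately have "Y * Phi = Y * (of_nat p + of_nat p * Y * W + Y ^ (p - 1))"
    using W by (simp add: algebra_simps power2_eq_square)
  then have e: "Phi = of_nat p + of_nat p * Y * W + Y ^ (p - 1)" using Yne by simp
  have Ym: "Y = - piz" unfolding Y_def piz_alt by simp
  have "even (p - 1)" using od p_ge3 by simp
  then have h1: "(- piz) ^ (p - 1) = piz ^ (p - 1)" by simp
  have h2: "(of_nat p :: int poly) = [:int p:]" by (simp add: of_nat_poly)
  have "Phi = [:int p:] + [:int p:] * (- piz) * W + piz ^ (p - 1)"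
    using e unfolding h2 Ym h1 .
  also have "\<dots> = [:int p:] * (1 - piz * W) + piz ^ (p - 1)" by (simp add: algebra_simps)
  finally have "Phi = [:int p:] * (1 - piz * W) + piz ^ (p - 1)" .
  then show ?thesis by blast
qed

definition cyclo_W :: "int poly" where "cyclo_W = (SOME W. Phi = [:int p:] * (1 - piz * W) + piz ^ (p - 1))"

lemma cyclo_W: "Phi = [:int p:] * (1 - piz * cyclo_W) + piz ^ (p - 1)"
  unfolding cyclo_W_def using someI_ex[OF cyclo_at_1_minus_pi] .

lemma pi_pow_p_minus_1_eq: "cong_z p 0 (piz ^ (p - 1)) ([:int p:] * (piz * cyclo_W - 1))"
proof -
  have "piz ^ (p - 1) - [:int p:] * (piz * cyclo_W - 1) = Phi"
    using cyclo_W by (simp add: algebra_simps)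
  then have "piz ^ (p - 1) - [:int p:] * (piz * cyclo_W - 1) = 0 * 0 + 1 * Phi" by simp
  then show ?thesis unfolding cong_z_def by blast
qed

definition eps :: "int poly" where
  "eps = [:int p:] * cyclo_W ^ (p - 1) - (\<Sum>i<p - 1. (piz * cyclo_W) ^ i)"

lemma p_eq_pi_pow_eps: "cong_z p 0 [:int p:] (piz ^ (p - 1) * eps)"
proof -
  define s where "s = piz * cyclo_W"
  define S where "S = (\<Sum>i<p - 1. s ^ i)"
  have a: "[:int p:] * (1 - s) = Phi - piz ^ (p - 1)"
    using cyclo_W unfolding s_def by (simp add: algebra_simps)
  have b: "(1 - s) * S = 1 - s ^ (p - 1)"
    unfolding S_def using power_diff_1_eq[of s "p - 1"] by (simp add: algebra_simps)
  have c: "[:int p:] * (1 - s ^ (p - 1)) = (Phi - piz ^ (p - 1)) * S"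
    using a b by (metis mult.assoc)
  have e: "piz ^ (p - 1) * eps = [:int p:] * s ^ (p - 1) - piz ^ (p - 1) * S"
    unfolding eps_def S_def s_def by (simp add: algebra_simps)
  have "[:int p:] - piz ^ (p - 1) * eps = [:int p:] * (1 - s ^ (p - 1)) + piz ^ (p - 1) * S"
    unfolding e by (simp add: algebra_simps)
  also have "\<dots> = 0 * 0 + S * Phi" unfolding c by (simp add: algebra_simps)
  finally show ?thesis unfolding cong_z_def by blast
qed

lemma eps_unit: "\<not> cong_z p piz eps 0"
proof -
  have "poly (\<Sum>i<p - 1. (piz * cyclo_W) ^ i) 1 = (\<Sum>i<p - 1. (0::int) ^ i)"
    by (simp add: poly_sum)
  also have "\<dots> = (\<Sum>i<p - 1. if i = 0 then 1 else 0)" by (simp add: power_0_left)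
  also have "\<dots> = 1" using p_ge3 by (simp add: sum.delta)
  finally have "poly eps 1 = int p * poly cyclo_W 1 ^ (p - 1) - 1" unfolding eps_def by simp
  moreover have "\<not> int p dvd int p * poly cyclo_W 1 ^ (p - 1) - 1"
  proof
    assume "int p dvd int p * poly cyclo_W 1 ^ (p - 1) - 1"
    from dvd_diff[OF dvd_triv_left[of "int p" "poly cyclo_W 1 ^ (p - 1)"] this] have "int p dvd 1"
      by simp
    then show False using p_ge3 by simp
  qed
  ultimately show ?thesis unfolding cong_z_pi_iff by simp
qed

lemma cong_pi_pow_imp_p_pow: "cong_z p (piz ^ ((p - 1) * k)) x y \<Longrightarrow> cong_z p [:int p ^ k:] x y"
proof -
  assume h: "cong_z p (piz ^ ((p - 1) * k)) x y"
  have "cong_z p 0 ((piz ^ (p - 1)) ^ k) (([:int p:] * (piz * cyclo_W - 1)) ^ k)"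
    by (rule cong_z_power[OF pi_pow_p_minus_1_eq])
  then have "cong_z p 0 (piz ^ ((p - 1) * k)) ([:int p ^ k:] * (piz * cyclo_W - 1) ^ k)"
    by (simp add: power_mult power_mult_distrib poly_const_pow smult_power)
  from cong_z_modulus[OF this h] show ?thesis by (rule cong_z_mono)
qed

lemma cong_p_pow_imp_pi_pow: "cong_z p [:int p ^ k:] x y \<Longrightarrow> cong_z p (piz ^ ((p - 1) * k)) x y"
proof -
  assume h: "cong_z p [:int p ^ k:] x y"
  have "cong_z p 0 ([:int p:] ^ k) ((piz ^ (p - 1) * eps) ^ k)"
    by (rule cong_z_power[OF p_eq_pi_pow_eps])
  then have "cong_z p 0 [:int p ^ k:] (piz ^ ((p - 1) * k) * eps ^ k)"
    by (simp add: power_mult power_mult_distrib poly_const_pow smult_power)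
  from cong_z_modulus[OF this h] show ?thesis by (rule cong_z_mono)
qed

lemma p_times_eq: "cong_z p 0 ([:int p:] * z) (piz ^ (p - 1) * (eps * z))"
  using cong_z_mult[OF p_eq_pi_pow_eps cong_z_refl[of p 0 z]] by (simp add: mult.assoc)

lemma pi_pow_p_minus_1_dvd_p: "cong_z p (piz ^ (p - 1)) [:int p:] 0"
  using cong_z_congr0[OF cong_z_multiple cong_z_sym[OF p_eq_pi_pow_eps]] .

text \<open>An integer divisible by pi^(p+1) = p pi^2 is divisible by p^2.\<close>
lemma int_cong_pi_pow_p1: "cong_z p (piz ^ (p + 1)) [:n:] 0 \<Longrightarrow> int p ^ 2 dvd n"
proof -
  assume h: "cong_z p (piz ^ (p + 1)) [:n:] 0"
  then have "cong_z p piz [:n:] 0" using pi_pow_mono[of 1 "p + 1"] by simp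
  then obtain n' where n: "n = int p * n'" using cong_z_pi_int by (auto elim: dvdE)
  have e: "[:int p:] * [:n':] = [:n:]" using n by simp
  from p_times_eq[of "[:n':]"] have "cong_z p 0 [:n:] (piz ^ (p - 1) * (eps * [:n':]))"
    by (simp only: e)
  moreover have "piz ^ (p + 1) = piz ^ (p - 1) * piz ^ 2"
  proof -
    have "p + 1 = (p - 1) + 2" using p_ge3 by simp
    then show ?thesis by (metis power_add)
  qed
  ultimately have "cong_z p (piz ^ (p - 1) * piz ^ 2) (piz ^ (p - 1) * (eps * [:n':])) 0"
    using h cong_z_congr0 by metis
  then have "cong_z p (piz ^ 2) (eps * [:n':]) 0" by (rule pi_cancel)
  then have "cong_z p (piz ^ 2) [:n':] 0" using pi_unit_cancel eps_unit by blast
  then have "cong_z p piz [:n':] 0" using pi_pow_mono[of 1 2] by simp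
  then have "int p dvd n'" using cong_z_pi_int by blast
  then show ?thesis using n by (simp add: power2_eq_square)
qed

lemma small_multiple_of_cyclo: "degree h < p - 1 \<Longrightarrow> h = q * Phi \<Longrightarrow> h = 0"
proof (rule ccontr)
  assume "degree h < p - 1" "h = q * Phi" "h \<noteq> 0"
  then have "q \<noteq> 0" by auto
  then have "degree h = degree q + (p - 1)"
    using \<open>h = q * Phi\<close> cyclo_ne0 by (simp add: degree_mult_eq degree_cyclo)
  then show False using \<open>degree h < p - 1\<close> by simp
qed

lemma all_p_pow_dvd_zero:
  assumes "\<And>k. cong_z p [:int p ^ k:] x 0"
  shows "cong_z p 0 x 0"
proof -
  obtain q r where qr: "x = q * Phi + r" "degree r < p - 1" using reduce by blast
  have dvd_r: "int p ^ k dvd coeff r i" for k i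
  proof -
    obtain c q' where c: "x - 0 = [:int p ^ k:] * c + q' * Phi"
      using assms[of k] unfolding cong_z_def by blast
    obtain q'' r'' where r'': "c = q'' * Phi + r''" "degree r'' < p - 1" using reduce by blast
    have "r - smult (int p ^ k) r'' = (q' + smult (int p ^ k) q'' - q) * Phi"
      using c qr(1) r''(1) by (simp add: algebra_simps smult_add_right mult_smult_left)
    moreover have "degree (r - smult (int p ^ k) r'') < p - 1"
      using qr(2) r''(2) by (meson degree_diff_less degree_smult_le le_less_trans)
    ultimately have "r = smult (int p ^ k) r''" using small_multiple_of_cyclo by fastforce
    then show ?thesis by simp
  qed
  have "coeff r i = 0" for i by (rule int_dvd_all_powers_eq_0[of p]) (use p_ge3 dvd_r in auto)
  then have "r = 0" by (simp add: poly_eq_iff)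
  then have "x - 0 = 0 * 0 + q * Phi" using qr by simp
  then show ?thesis unfolding cong_z_def by blast
qed

text \<open>The pi-adic valuation: pi_val t x says that pi^t divides x exactly.  Every nonzero
  element has a valuation, since Z[zeta] is p-adically separated.\<close>

definition pi_val :: "nat \<Rightarrow> int poly \<Rightarrow> bool" where
  "pi_val t x \<longleftrightarrow> cong_z p (piz ^ t) x 0 \<and> \<not> cong_z p (piz ^ Suc t) x 0"

lemma nonzero_has_pi_val:
  assumes "\<not> cong_z p 0 x 0" shows "\<exists>t. pi_val t x"
proof -
  have "\<exists>t. \<not> cong_z p (piz ^ t) x 0"
  proof (rule ccontr)
    assume "\<not> (\<exists>t. \<not> cong_z p (piz ^ t) x 0)"
    then have "cong_z p [:int p ^ k:] x 0" for k using cong_pi_pow_imp_p_pow by blast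
    then show False using all_p_pow_dvd_zero assms by blast
  qed
  then have ex1: "\<not> cong_z p (piz ^ (LEAST t. \<not> cong_z p (piz ^ t) x 0)) x 0"
    by (rule LeastI_ex)
  define K where "K = (LEAST t. \<not> cong_z p (piz ^ t) x 0)"
  have "K \<noteq> 0" using ex1 unfolding K_def[symmetric] by (metis power_0 cong_z_one)
  then obtain t where t: "K = Suc t" by (cases K) auto
  have "cong_z p (piz ^ t) x 0"
    using not_less_Least[of t "\<lambda>t. \<not> cong_z p (piz ^ t) x 0"] t K_def by auto
  then show ?thesis using ex1 unfolding K_def[symmetric] t pi_val_def by blast
qed

lemma pi_val_add_higher:
  assumes "pi_val t x" and "cong_z p (piz ^ Suc t) y 0"
  shows "pi_val t (x + y)"
proof -
  have "cong_z p (piz ^ t) y 0" using assms(2) pi_pow_mono[of t "Suc t"] by simp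
  then have "cong_z p (piz ^ t) (x + y) 0"
    using cong_z_add assms(1) unfolding pi_val_def by fastforce
  moreover have "\<not> cong_z p (piz ^ Suc t) (x + y) 0"
  proof
    assume "cong_z p (piz ^ Suc t) (x + y) 0"
    from cong_z_diff[OF this assms(2)] have "cong_z p (piz ^ Suc t) x 0" by simp
    then show False using assms(1) unfolding pi_val_def by blast
  qed
  ultimately show ?thesis unfolding pi_val_def by blast
qed

lemma pi_val_mult_unit:
  assumes "pi_val t x" and "\<not> cong_z p piz c 0"
  shows "pi_val t (x * c)"
  using assms pi_unit_cancel[of "Suc t" c x] cong_z_times
  unfolding pi_val_def by (metis mult.commute)

lemma pi_val_mult_p:
  assumes "pi_val s y"
  shows "pi_val (s + (p - 1)) ([:int p:] * y)"
proof -
  have ys: "cong_z p (piz ^ s) y 0" and yns: "\<not> cong_z p (piz ^ Suc s) y 0"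
    using assms unfolding pi_val_def by blast+
  have "cong_z p (piz ^ (s + (p - 1))) ([:int p:] * y) 0"
    using cong_z_mult0[OF pi_pow_p_minus_1_dvd_p ys] by (metis add.commute power_add)
  moreover have "\<not> cong_z p (piz ^ Suc (s + (p - 1))) ([:int p:] * y) 0"
  proof
    assume a: "cong_z p (piz ^ Suc (s + (p - 1))) ([:int p:] * y) 0"
    have "Suc (s + (p - 1)) = (p - 1) + Suc s" by simp
    then have e: "piz ^ Suc (s + (p - 1)) = piz ^ (p - 1) * piz ^ Suc s" by (metis power_add)
    have "cong_z p (piz ^ (p - 1) * piz ^ Suc s) (piz ^ (p - 1) * (eps * y)) 0"
      using cong_z_congr0[OF a[unfolded e] p_times_eq] .
    then have "cong_z p (piz ^ Suc s) (eps * y) 0" by (rule pi_cancel)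
    then show False using pi_unit_cancel eps_unit yns by blast
  qed
  ultimately show ?thesis unfolding pi_val_def by blast
qed

text \<open>For z divisible by pi^s, s \<ge> 2, the binomial tail of (1 + z)^p beyond 1 + p z is
  divisible by pi^(p+s): p z^2 contributes pi^(p-1+2s) and z^p contributes pi^(ps).\<close>

lemma binom_p_tail:
  assumes zs: "cong_z p (piz ^ s) z 0" and s2: "s \<ge> 2"
  shows "cong_z p (piz ^ (p + s)) ((1 + z) ^ p - 1 - [:int p:] * z) 0"
proof -
  obtain W where W: "(1 + z) ^ p = 1 + of_nat p * z + of_nat p * z^2 * W + z ^ p"
    using binom_p[OF pr p_ge3] by blast
  have tail: "(1 + z) ^ p - 1 - [:int p:] * z = [:int p:] * z^2 * W + z ^ p"
    using W by (simp add: of_nat_poly)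
  have "cong_z p (piz ^ (p - 1) * (piz ^ s * piz ^ s)) ([:int p:] * (z * z) * W) 0"
    by (intro cong_z_times cong_z_mult0 pi_pow_p_minus_1_dvd_p zs)
  then have a: "cong_z p (piz ^ (p - 1 + s + s)) ([:int p:] * z^2 * W) 0"
    by (simp add: power_add power2_eq_square mult.assoc)
  have b: "cong_z p (piz ^ (s * p)) (z ^ p) 0"
    using cong_z_pow0[OF zs, of p] by (simp add: power_mult)
  have "p + s \<le> p - 1 + s + s" using s2 p_ge3 by simp
  moreover have "p + s \<le> s * p"
  proof -
    have "s * p = s + s * (p - 1)" using p_gt0 by (cases p) auto
    moreover have "2 * (p - 1) \<le> s * (p - 1)" using s2 by simp
    ultimately show ?thesis using p_ge3 by linarith
  qed
  ultimately show ?thesis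
    unfolding tail using cong_z_add[OF pi_pow_mono[OF _ a] pi_pow_mono[OF _ b]] by simp
qed

lemma pi_val_pow_p:
  assumes "pi_val s y" and "s \<ge> 2"
  shows "pi_val (s + (p - 1)) ((1 + y) ^ p - 1)"
proof -
  have e: "p + s = Suc (s + (p - 1))" using p_gt0 by simp
  have tail: "cong_z p (piz ^ Suc (s + (p - 1))) ((1 + y) ^ p - 1 - [:int p:] * y) 0"
    using binom_p_tail[of s y] assms unfolding pi_val_def e[symmetric] by blast
  from pi_val_add_higher[OF pi_val_mult_p[OF assms(1)] tail] show ?thesis by simp
qed

lemma geometric_sum_cong:
  assumes "[a = 1] (mod int p)" shows "[(\<Sum>i<N. a ^ i) = int N] (mod int p)"
proof (induction N)
  case 0 then show ?case by simp
next
  case (Suc N)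
  have "[a ^ N = 1] (mod int p)" using cong_pow[OF assms, of N] by simp
  from cong_add[OF Suc.IH this] show ?case by (simp add: add.commute)
qed

lemma pi_val_pow_coprime:
  assumes "pi_val t (w - 1)" and "cong_z p piz w 1" and "\<not> p dvd n"
  shows "pi_val t (w ^ n - 1)"
proof -
  define S where "S = (\<Sum>i<n. w ^ i)"
  have "cong_z p piz (w - 1) 0" using assms(2) cong_z_iff_0 by blast
  then have pw: "[poly w 1 = 1] (mod int p)"
    unfolding cong_z_pi_iff by (simp add: cong_iff_dvd_diff)
  have "poly S 1 = (\<Sum>i<n. poly w 1 ^ i)" unfolding S_def by (simp add: poly_sum)
  then have "[poly S 1 = int n] (mod int p)" using geometric_sum_cong[OF pw] by simp
  then have "\<not> int p dvd poly S 1" using assms(3) by (metis cong_dvd_iff int_dvd_int_iff)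
  then have "\<not> cong_z p piz S 0" unfolding cong_z_pi_iff .
  moreover have "w ^ n - 1 = (w - 1) * S" unfolding S_def by (rule power_diff_1_eq)
  ultimately show ?thesis using pi_val_mult_unit[OF assms(1)] by simp
qed

lemma pi_val_pow_minus_one:
  assumes w: "pi_val t (w - 1)" and t2: "t \<ge> 2" and "n > 0"
  shows "\<exists>s\<ge>2. pi_val s (w ^ n - 1)"
  using assms(3)
proof (induction n rule: less_induct)
  case (less n)
  show ?case
  proof (cases "p dvd n")
    case False
    have "cong_z p (piz ^ 1) (w - 1) 0" using w t2 pi_pow_mono[of 1 t] unfolding pi_val_def by auto
    then have "cong_z p piz w 1" using cong_z_iff_0 by simp
    then show ?thesis using pi_val_pow_coprime[OF w _ False] t2 by blast
  next
    case True
    then obtain m where m: "n = p * m" by (auto elim: dvdE)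
    then have "m > 0" "m < n" using less.prems p_ge3 by auto
    then obtain s where s: "s \<ge> 2" "pi_val s (w ^ m - 1)" using less.IH by blast
    have "w ^ n - 1 = (1 + (w ^ m - 1)) ^ p - 1" unfolding m by (simp add: power_mult mult.commute)
    then have "pi_val (s + (p - 1)) (w ^ n - 1)" using pi_val_pow_p[OF s(2) s(1)] by simp
    then show ?thesis using s(1) by (intro exI[of _ "s + (p - 1)"]) auto
  qed
qed

lemma root_of_unity_cong_1:
  assumes "cong_z p (piz ^ 2) w 1" and "N > 0" and "cong_z p 0 (w ^ N) 1"
  shows "cong_z p 0 w 1"
proof (rule ccontr)
  assume "\<not> cong_z p 0 w 1"
  then have "\<not> cong_z p 0 (w - 1) 0" using cong_z_iff_0 by blast
  then obtain t where t: "pi_val t (w - 1)" using nonzero_has_pi_val by blast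
  have "t \<ge> 2"
  proof (rule ccontr)
    assume "\<not> t \<ge> 2"
    then have "cong_z p (piz ^ Suc t) (w - 1) 0"
      using assms(1) cong_z_iff_0 pi_pow_mono[of "Suc t" 2] by auto
    then show False using t unfolding pi_val_def by blast
  qed
  then obtain s where "pi_val s (w ^ N - 1)" using pi_val_pow_minus_one[OF t _ assms(2)] by blast
  moreover have "cong_z p 0 (w ^ N - 1) 0" using assms(3) cong_z_iff_0 by blast
  ultimately show False unfolding pi_val_def using cong_z_0_imp by blast
qed

text \<open>The coefficients of an element of degree < p - 1 are
  recovered from its embeddings by a discrete Fourier transform; if all embeddings have
  absolute value 1, every coefficient has absolute value at most 1.\<close>

lemma evalc_coeffs: "degree r < n \<Longrightarrow> evalc z r = (\<Sum>j<n. of_int (coeff r j) * z ^ j)"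
proof -
  assume "degree r < n"
  then have "(\<Sum>i\<le>n - 1. monom (coeff r i) i) = r" by (intro poly_as_sum_of_monoms') auto
  moreover have "{..n - 1} = {..<n}" using \<open>degree r < n\<close> by auto
  ultimately have "r = (\<Sum>i<n. monom (coeff r i) i)" by simp
  then have "evalc z r = evalc z (\<Sum>i<n. monom (coeff r i) i)" by simp
  then show ?thesis by (simp add: evalc_sum)
qed

lemma inner_sum: "i < p \<Longrightarrow> j < p \<Longrightarrow> (\<Sum>k<p. zeta ^ (k * (j + p - i))) = (if j = i then of_nat p else 0)"
proof -
  assume ij: "i < p" "j < p"
  have e: "(\<Sum>k<p. zeta ^ (k * (j + p - i))) = (\<Sum>k<p. (zeta ^ (j + p - i)) ^ k)"
    by (simp add: power_mult mult.commute flip: power_mult)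
  show ?thesis
  proof (cases "j = i")
    case True
    then have "zeta ^ (j + p - i) = 1" by (simp add: zeta_p)
    then show ?thesis using e True by simp
  next
    case False
    have "\<not> p dvd (j + p - i)"
    proof
      assume "p dvd (j + p - i)"
      moreover have "0 < j + p - i" "j + p - i < 2 * p" "j + p - i \<noteq> p"
        using ij False by auto
      ultimately obtain c where c: "j + p - i = p * c" "0 < p * c" "p * c < p * 2" "p * c \<noteq> p"
        by (metis dvdE mult.commute)
      then have "c < 2" "c > 0" by (simp_all add: mult_less_cancel1)
      then have "c = 1" by simp
      then show False using c by simp
    qed
    then have ne: "zeta ^ (j + p - i) \<noteq> 1" by (simp add: zeta_pow_eq1)
    have "(zeta ^ (j + p - i)) ^ p = 1" by (metis power_mult mult.commute zeta_p power_one)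
    then show ?thesis using e False ne by (simp add: geometric_sum)
  qed
qed

lemma dft:
  assumes "degree r < p" "i < p"
  shows "(\<Sum>k<p. evalc (zeta ^ k) r * zeta ^ (k * (p - i))) = of_nat p * of_int (coeff r i)"
proof -
  have "(\<Sum>k<p. evalc (zeta ^ k) r * zeta ^ (k * (p - i)))
      = (\<Sum>k<p. \<Sum>j<p. of_int (coeff r j) * zeta ^ (k * (j + p - i)))"
  proof (rule sum.cong[OF refl])
    fix k assume "k \<in> {..<p}"
    have "evalc (zeta ^ k) r * zeta ^ (k * (p - i)) = (\<Sum>j<p. of_int (coeff r j) * (zeta ^ k) ^ j) * zeta ^ (k * (p - i))"
      using evalc_coeffs[OF assms(1)] by simp
    also have "\<dots> = (\<Sum>j<p. of_int (coeff r j) * zeta ^ (k * (j + p - i)))"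
      unfolding sum_distrib_right
    proof (rule sum.cong[OF refl])
      fix j assume "j \<in> {..<p}"
      have "k * (j + p - i) = k * j + k * (p - i)" using assms(2) by (simp add: algebra_simps)
      then show "of_int (coeff r j) * (zeta ^ k) ^ j * zeta ^ (k * (p - i)) = of_int (coeff r j) * zeta ^ (k * (j + p - i))"
        by (simp add: power_add power_mult)
    qed
    finally show "evalc (zeta ^ k) r * zeta ^ (k * (p - i)) = (\<Sum>j<p. of_int (coeff r j) * zeta ^ (k * (j + p - i)))" .
  qed
  also have "\<dots> = (\<Sum>j<p. of_int (coeff r j) * (\<Sum>k<p. zeta ^ (k * (j + p - i))))"
    by (subst sum.swap) (simp add: sum_distrib_left)
  also have "\<dots> = (\<Sum>j<p. of_int (coeff r j) * (if j = i then of_nat p else 0))"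
    using inner_sum assms(2) by simp
  also have "\<dots> = (\<Sum>j<p. if j = i then of_nat p * of_int (coeff r i) else 0)"
    by (intro sum.cong) auto
  also have "\<dots> = of_nat p * of_int (coeff r i)" using assms(2) by (simp add: sum.delta)
  finally show ?thesis .
qed

lemma coeff_bound:
  assumes "degree r < p - 1" "\<And>k. 0 < k \<Longrightarrow> k < p \<Longrightarrow> norm (evalc (zeta ^ k) r) = 1" "i < p"
  shows "\<bar>coeff r i\<bar> \<le> 1"
proof -
  have dr: "degree r < p" using assms(1) by simp
  have sp: "{..<p} = insert 0 {1..<p}" by auto
  have bnd: "norm (\<Sum>k\<in>{1..<p}. evalc (zeta ^ k) r * zeta ^ (k * (p - j))) \<le> of_nat (p - 1)" for j
  proof -
    have "norm (\<Sum>k\<in>{1..<p}. evalc (zeta ^ k) r * zeta ^ (k * (p - j))) \<le> (\<Sum>k\<in>{1..<p}. norm (evalc (zeta ^ k) r * zeta ^ (k * (p - j))))"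
      by (rule norm_sum)
    also have "\<dots> = (\<Sum>k\<in>{1..<p}. 1)"
      using assms(2) by (intro sum.cong) (auto simp: norm_mult)
    finally show ?thesis by simp
  qed
  have "coeff r (p - 1) = 0" using assms(1) by (simp add: coeff_eq_0)
  then have "(\<Sum>k<p. evalc (zeta ^ k) r * zeta ^ (k * (p - (p - 1)))) = 0"
    using dft[OF dr, of "p - 1"] by simp
  then have "evalc 1 r + (\<Sum>k\<in>{1..<p}. evalc (zeta ^ k) r * zeta ^ (k * (p - (p - 1)))) = 0"
    unfolding sp by (simp add: sum.insert)
  then have n1: "norm (evalc 1 r) \<le> of_nat (p - 1)"
    using bnd[of "p - 1"] by (metis add_eq_0_iff norm_minus_cancel)
  have "of_nat p * of_int (coeff r i) = evalc 1 r + (\<Sum>k\<in>{1..<p}. evalc (zeta ^ k) r * zeta ^ (k * (p - i)))"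
    using dft[OF dr assms(3)] unfolding sp by (simp add: sum.insert)
  then have "norm (of_nat p * (of_int (coeff r i) :: complex)) \<le> of_nat (p - 1) + of_nat (p - 1)"
    using n1 bnd[of i] by (metis norm_triangle_mono)
  then have "real p * \<bar>real_of_int (coeff r i)\<bar> \<le> 2 * real (p - 1)"
    by (simp add: norm_mult)
  moreover have "real (p - 1) = real p - 1" using p_ge3 by (simp add: of_nat_diff)
  ultimately have "real p * \<bar>real_of_int (coeff r i)\<bar> < real p * 2" by linarith
  then have "\<bar>real_of_int (coeff r i)\<bar> < 2" by simp
  then show ?thesis by linarith
qed

lemma finite_small_polys: "finite {r :: int poly. degree r < p - 1 \<and> (\<forall>i. \<bar>coeff r i\<bar> \<le> 1)}" (is "finite ?S")
proof -
  let ?f = "\<lambda>r::int poly. map (coeff r) [0..<p - 1]"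
  have inj: "inj_on ?f ?S"
  proof (rule inj_onI)
    fix r s assume "r \<in> ?S" "s \<in> ?S" "?f r = ?f s"
    then have "coeff r i = coeff s i" for i
      by (cases "i < p - 1") (auto simp: coeff_eq_0 dest: map_eq_conv[THEN iffD1] simp: map_eq_conv)
    then show "r = s" by (simp add: poly_eq_iff)
  qed
  have "?f ` ?S \<subseteq> {xs. set xs \<subseteq> {-1, 0, 1} \<and> length xs = p - 1}"
  proof
    fix xs assume "xs \<in> ?f ` ?S"
    then obtain r where r: "r \<in> ?S" "xs = ?f r" by blast
    have "set xs \<subseteq> {-1, 0, 1}"
    proof
      fix x assume "x \<in> set xs"
      then obtain i where "x = coeff r i" using r by auto
      then have "\<bar>x\<bar> \<le> 1" using r by simp
      then show "x \<in> {-1, 0, 1}" by auto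
    qed
    then show "xs \<in> {xs. set xs \<subseteq> {-1, 0, 1} \<and> length xs = p - 1}"
      using r by simp
  qed
  moreover have "finite {xs. set xs \<subseteq> {-1::int, 0, 1} \<and> length xs = p - 1}"
    by (rule finite_lists_length_eq) simp
  ultimately have "finite (?f ` ?S)" by (rule finite_subset)
  then show ?thesis using inj by (rule finite_imageD)
qed

lemma finite_unimodular:
  "finite {r :: int poly. degree r < p - 1 \<and> (\<forall>k. 0 < k \<and> k < p \<longrightarrow> norm (evalc (zeta ^ k) r) = 1)}"
  (is "finite ?U")
proof (rule finite_subset[OF _ finite_small_polys])
  show "?U \<subseteq> {r. degree r < p - 1 \<and> (\<forall>i. \<bar>coeff r i\<bar> \<le> 1)}"
  proof
    fix r assume "r \<in> ?U"
    then have d: "degree r < p - 1"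
      and n: "\<And>k. 0 < k \<Longrightarrow> k < p \<Longrightarrow> norm (evalc (zeta ^ k) r) = 1"
        by auto
    have "\<bar>coeff r i\<bar> \<le> 1" for i
      using coeff_bound[OF d n] d by (cases "i < p") (auto simp: coeff_eq_0)
    then show "r \<in> {r. degree r < p - 1 \<and> (\<forall>i. \<bar>coeff r i\<bar> \<le> 1)}"
      using d by simp
  qed
qed

text \<open>An element all of whose embeddings have absolute value 1 is a root of unity: its
  powers have only finitely many reduced representatives.\<close>

lemma unimodular_root_of_unity:
  assumes nw: "\<And>k. 0 < k \<Longrightarrow> k < p \<Longrightarrow> norm (evalc (zeta ^ k) w) = 1"
  shows "\<exists>N>0. cong_z p 0 (w ^ N) 1"
proof -
  define R where "R = (\<lambda>m. SOME r. \<exists>q. w ^ m = q * Phi + r \<and> degree r < p - 1)"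
  have R: "\<exists>q. w ^ m = q * Phi + R m \<and> degree (R m) < p - 1" for m
    unfolding R_def by (rule someI_ex) (use reduce[of "w ^ m"] in blast)
  have evR: "evalc (zeta ^ k) (R m) = evalc (zeta ^ k) w ^ m" if "0 < k" "k < p" for k m
  proof -
    obtain q where q: "w ^ m = q * Phi + R m" using R[of m] by blast
    have nd: "\<not> p dvd k" using that by (auto dest: dvd_imp_le)
    from arg_cong[OF q, of "evalc (zeta ^ k)"] show ?thesis using evalc_cyclo[OF nd] by simp
  qed
  have "range R \<subseteq> {r. degree r < p - 1 \<and> (\<forall>k. 0 < k \<and> k < p \<longrightarrow> norm (evalc (zeta ^ k) r) = 1)}"
    using R evR nw by (auto simp: norm_power)
  then have "finite (range R)" using finite_unimodular finite_subset by blast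
  then have "\<not> inj R" using finite_imageD infinite_UNIV_nat by blast
  then obtain a b where ab: "a < b" "R a = R b" unfolding inj_def by (metis linorder_neqE_nat)
  have "cong_z p 0 (w ^ (b - a)) 1"
  proof (rule evalc_cong_z0)
    fix k :: nat assume k: "0 < k" "k < p"
    define z where "z = evalc (zeta ^ k) w"
    have "z \<noteq> 0" using nw[OF k] unfolding z_def by auto
    have "z ^ a = z ^ b" using evR[OF k, of a] evR[OF k, of b] ab unfolding z_def by simp
    also have "z ^ b = z ^ a * z ^ (b - a)" using ab by (simp flip: power_add)
    finally have "z ^ (b - a) = 1" using \<open>z \<noteq> 0\<close> by simp
    then show "evalc (zeta ^ k) (w ^ (b - a)) = evalc (zeta ^ k) 1" unfolding z_def by simp
  qed
  then show ?thesis using ab by (intro exI[of _ "b - a"]) auto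
qed

lemma evalc_conjz: "evalc (zeta ^ k) (conjz p f) = cnj (evalc (zeta ^ k) f)"
proof -
  have "evalc (zeta ^ k) (conjz p f) = evalc ((zeta ^ k) ^ (p - 1)) f"
    unfolding conjz_def by (simp add: evalc_pcompose)
  also have "(zeta ^ k) ^ (p - 1) = cnj (zeta ^ k)"
    unfolding cnj_zeta[of k] by (simp only: power_mult)
  finally show ?thesis by (simp add: evalc_cnj)
qed

lemma evalc_unit: "cong_z p 0 (u * v) 1 \<Longrightarrow> 0 < k \<Longrightarrow> k < p \<Longrightarrow> evalc (zeta ^ k) u * evalc (zeta ^ k) v = 1"
  using cong_z0_iff_evalc by fastforce

lemma unit_over_conj_root_of_unity:
  assumes uv: "cong_z p 0 (u * v) 1"
  shows "\<exists>N>0. cong_z p 0 ((u * conjz p v) ^ N) 1"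
proof (rule unimodular_root_of_unity)
  fix k :: nat assume k: "0 < k" "k < p"
  have "norm (evalc (zeta ^ k) (u * conjz p v)) = norm (evalc (zeta ^ k) u * evalc (zeta ^ k) v)"
    by (simp add: evalc_conjz norm_mult)
  also have "\<dots> = 1" using evalc_unit[OF uv k] by simp
  finally show "norm (evalc (zeta ^ k) (u * conjz p v)) = 1" .
qed

definition sigma :: "nat \<Rightarrow> int poly \<Rightarrow> int poly" where
  "sigma j f = pcompose f (monom 1 j)"

lemma evalc_sigma: "evalc z (sigma j f) = evalc (z ^ j) f"
  unfolding sigma_def by (simp add: evalc_pcompose)

lemma sigma_add: "sigma j (f + g) = sigma j f + sigma j g" unfolding sigma_def by (simp add: pcompose_add)

lemma sigma_diff: "sigma j (f - g) = sigma j f - sigma j g" unfolding sigma_def by (simp add: pcompose_diff)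

lemma sigma_mult: "sigma j (f * g) = sigma j f * sigma j g" unfolding sigma_def by (simp add: pcompose_mult)

lemma sigma_power: "sigma j (f ^ n) = sigma j f ^ n" by (induction n) (auto simp: sigma_def pcompose_1 pcompose_mult)

lemma sigma_const[simp]: "sigma j [:a:] = [:a:]" unfolding sigma_def by simp

lemma sigma_1[simp]: "sigma j 1 = 1" unfolding sigma_def by (simp add: pcompose_1)

lemma sigma_0[simp]: "sigma j 0 = 0" unfolding sigma_def by simp

lemma sigma_smult[simp]: "sigma j (smult a f) = smult a (sigma j f)" unfolding sigma_def by (simp add: pcompose_smult)

lemma conjz_sigma: "conjz p f = sigma (p - 1) f" unfolding conjz_def sigma_def by simp

lemma not_dvd_mult: "\<not> p dvd j \<Longrightarrow> \<not> p dvd k \<Longrightarrow> \<not> p dvd (k * j)"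
  using pr by (simp add: prime_dvd_mult_iff)

lemma not_dvd_below_p: "0 < k \<Longrightarrow> k < p \<Longrightarrow> \<not> p dvd k"
  by (auto dest: dvd_imp_le)

lemma not_dvd_p_minus_1: "\<not> p dvd (p - 1)"
  using p_ge3 by (intro not_dvd_below_p) auto

lemma sigma_cyclo: "\<not> p dvd j \<Longrightarrow> cong_z p 0 (sigma j Phi) 0"
proof (rule evalc_cong_z0)
  fix k :: nat assume "\<not> p dvd j" "0 < k" "k < p"
  then have "\<not> p dvd (k * j)" using not_dvd_mult not_dvd_below_p by blast
  then show "evalc (zeta ^ k) (sigma j Phi) = evalc (zeta ^ k) 0"
    by (simp add: evalc_sigma evalc_cyclo flip: power_mult)
qed

lemma sigma_piz: "sigma j piz = piz * (\<Sum>i<j. X ^ i)"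
proof -
  have "sigma j piz = 1 - X ^ j"
    unfolding sigma_def piz_alt by (simp add: pcompose_diff pcompose_1 monom_X pcompose_pCons)
  also have "\<dots> = piz * (\<Sum>i<j. X ^ i)" unfolding piz_alt using power_diff_1_eq[of X j]
    by (simp add: algebra_simps)
  finally show ?thesis .
qed

lemma sigma_cong_z: "\<not> p dvd j \<Longrightarrow> cong_z p d x y \<Longrightarrow> cong_z p (sigma j d) (sigma j x) (sigma j y)"
proof -
  assume j: "\<not> p dvd j" and "cong_z p d x y"
  then obtain c q where e: "x - y = d * c + q * Phi" unfolding cong_z_def by blast
  obtain q' where q': "sigma j Phi = q' * Phi" using sigma_cyclo[OF j] unfolding cong_z_def by auto
  have "sigma j x - sigma j y = sigma j d * sigma j c + (sigma j q * q') * Phi"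
    using arg_cong[OF e, of "sigma j"] q' by (simp add: sigma_diff sigma_add sigma_mult mult.assoc)
  then show ?thesis unfolding cong_z_def by blast
qed

lemma sigma_cong_z0: "\<not> p dvd j \<Longrightarrow> cong_z p 0 x y \<Longrightarrow> cong_z p 0 (sigma j x) (sigma j y)"
  using sigma_cong_z[of j 0] by simp

lemma sigma_cong_z_pi: "\<not> p dvd j \<Longrightarrow> cong_z p (piz ^ k) x y \<Longrightarrow> cong_z p (piz ^ k) (sigma j x) (sigma j y)"
  using sigma_cong_z[of j "piz ^ k" x y]
    by (auto simp: sigma_power sigma_piz power_mult_distrib intro: cong_z_mono)

lemma cancel_p: "cong_z p 0 ([:int p:] * z) 0 \<Longrightarrow> cong_z p 0 z 0"
proof -
  assume h: "cong_z p 0 ([:int p:] * z) 0"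
  show ?thesis
  proof (rule evalc_cong_z0)
    fix k :: nat assume "0 < k" "k < p"
    then have "evalc (zeta ^ k) ([:int p:] * z) = 0" using cong_z0_iff_evalc h by fastforce
    then show "evalc (zeta ^ k) z = evalc (zeta ^ k) 0" using p_gt0 by simp
  qed
qed

lemma unit_cong_integer_is_real:
  assumes uv: "cong_z p 0 (u * v) 1" and ua: "cong_z p (piz ^ 2) u [:a:]"
  shows "cong_z p 0 (conjz p u) u"
proof -
  define w where "w = u * conjz p v"
  obtain N where N: "N > 0" "cong_z p 0 (w ^ N) 1"
    using unit_over_conj_root_of_unity[OF uv] unfolding w_def by blast
  have "cong_z p (piz ^ 2) (u * v) ([:a:] * v)" using cong_z_mult[OF ua cong_z_refl] .
  moreover have "cong_z p (piz ^ 2) (u * v) 1" using cong_z_0_imp[OF uv] .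
  ultimately have av: "cong_z p (piz ^ 2) ([:a:] * v) 1" using cong_z_sym cong_z_trans by blast
  have "cong_z p (piz ^ 2) ([:a:] * conjz p v) 1"
    using sigma_cong_z_pi[OF not_dvd_p_minus_1 av] by (simp add: conjz_sigma sigma_mult)
  moreover have "cong_z p (piz ^ 2) w ([:a:] * conjz p v)"
    unfolding w_def using cong_z_mult[OF ua cong_z_refl] .
  ultimately have "cong_z p (piz ^ 2) w 1" using cong_z_trans by blast
  then have w1: "cong_z p 0 w 1" using root_of_unity_cong_1 N by blast
  have c1: "cong_z p 0 (conjz p u * conjz p v) 1"
    using sigma_cong_z0[OF not_dvd_p_minus_1 uv] by (simp add: conjz_sigma sigma_mult)
  have e: "conjz p u * w = u * (conjz p u * conjz p v)" unfolding w_def by (simp add: ac_simps)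
  have m1: "cong_z p 0 (u * (conjz p u * conjz p v)) u" using cong_z_mult_left[OF c1, of u] by simp
  have m2: "cong_z p 0 (conjz p u * w) (conjz p u)"
    using cong_z_mult_left[OF w1, of "conjz p u"] by simp
  have "cong_z p 0 (conjz p u) (u * (conjz p u * conjz p v))" using cong_z_sym[OF m2] unfolding e .
  from cong_z_trans[OF this m1] show ?thesis .
qed

text \<open>A real element divisible by pi is divisible by pi^2: conjugation maps pi to
  -zeta^(-1) pi, so for t = pi z real, z + zeta^(-1) conj(z) = 0, forcing 2 z = 0 (mod pi).\<close>

lemma real_pi_dvd_imp_pi2:
  assumes real: "cong_z p 0 (conjz p t) t" and d: "cong_z p piz t 0"
  shows "cong_z p (piz ^ 2) t 0"
proof -
  obtain z q where tz: "t = piz * z + q * Phi" using d unfolding cong_z_def by auto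
  have cp: "cong_z p 0 (conjz p piz) (- (X ^ (p - 1)) * piz)"
  proof (rule evalc_cong_z0)
    fix k :: nat assume "0 < k" "k < p"
    have "(zeta ^ k) ^ (p - 1) * zeta ^ k = (zeta ^ k) ^ p" by (metis power_Suc2 Suc_pred' p_gt0)
    also have "\<dots> = 1" by (metis power_mult mult.commute zeta_p power_one)
    finally have "(zeta ^ k) ^ (p - 1) * zeta ^ k = 1" .
    then show "evalc (zeta ^ k) (conjz p piz) = evalc (zeta ^ k) (- (X ^ (p - 1)) * piz)"
      by (simp add: conjz_sigma evalc_sigma piz_def algebra_simps)
  qed
  have tz0: "cong_z p 0 t (piz * z)" using tz unfolding cong_z_def by auto
  then have "cong_z p 0 (conjz p t) (conjz p piz * conjz p z)"
    using sigma_cong_z0[OF not_dvd_p_minus_1, of t "piz * z"] by (simp add: conjz_sigma sigma_mult)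
  then have "cong_z p 0 (conjz p t) (- (X ^ (p - 1)) * piz * conjz p z)"
    using cong_z_mult[OF cp cong_z_refl] cong_z_trans by blast
  then have "cong_z p 0 (piz * z) (- (X ^ (p - 1)) * piz * conjz p z)"
    using real tz0 cong_z_sym cong_z_trans by blast
  then have "cong_z p 0 (piz * z - (- (X ^ (p - 1)) * piz * conjz p z)) 0"
    using cong_z_iff_0 by blast
  moreover have "piz * z - (- (X ^ (p - 1)) * piz * conjz p z) = piz * (z + X ^ (p - 1) * conjz p z)"
    by (simp add: algebra_simps)
  ultimately have "cong_z p 0 (piz * (z + X ^ (p - 1) * conjz p z)) 0" by simp
  then have "cong_z p 0 (z + X ^ (p - 1) * conjz p z) 0" using pi_cancel1[of 0] by simp
  then have "cong_z p piz (z + X ^ (p - 1) * conjz p z) 0" by (rule cong_z_0_imp)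
  then have "int p dvd 2 * poly z 1"
    unfolding cong_z_pi_iff by (simp add: conjz_def poly_pcompose poly_monom)
  then have "cong_z p piz z 0" unfolding cong_z_pi_iff int_p_dvd_2_times .
  moreover have "cong_z p piz piz 0" using cong_z_multiple[of p piz 1] by simp
  ultimately have "cong_z p (piz * piz) (piz * z) 0" using cong_z_mult0 by blast
  then show ?thesis using cong_z_congr0 cong_z_sym[OF tz0] by (simp add: power2_eq_square)
qed

text \<open>Step (2): if u = a (mod pi^2) with p not dividing a, and u^2 = b (mod p), then
  u = a (mod p), since (u - a)(u + a) = u^2 - a^2 = 0 (mod p) and u + a = 2a (mod pi) is
  prime to pi.\<close>

lemma unit_cong_mod_p:
  assumes ua: "cong_z p (piz ^ 2) u [:a:]" and pa: "\<not> int p dvd a"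
    and u2b: "cong_z p (piz ^ (p - 1)) (u ^ 2) [:b:]"
  shows "cong_z p (piz ^ (p - 1)) u [:a:]"
proof -
  define x where "x = u - [:a:]"
  have x2: "cong_z p (piz ^ 2) x 0" using ua cong_z_iff_0 unfolding x_def by blast
  have "cong_z p (piz ^ 2) (u ^ 2) [:a ^ 2:]"
    using cong_z_power[OF ua] by (simp add: poly_const_pow)
  moreover have "cong_z p (piz ^ 2) (u ^ 2) [:b:]" using pi_pow_mono[OF _ u2b] p_ge3 by simp
  ultimately have "cong_z p (piz ^ 2) [:a ^ 2:] [:b:]" using cong_z_sym cong_z_trans by blast
  then have "cong_z p (piz ^ 2) ([:a ^ 2:] - [:b:]) 0" using cong_z_iff_0 by blast
  then have "cong_z p piz [:a ^ 2 - b:] 0" using pi_pow_mono[of 1 2] by simp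
  then obtain m where m: "a ^ 2 - b = int p * m" using cong_z_pi_int by (auto elim: dvdE)
  have "cong_z p [:int p:] [:a ^ 2 - b:] 0"
    using m cong_z_multiple[of p "[:int p:]" "[:m:]"] by (simp add: mult.commute)
  then have ab: "cong_z p (piz ^ (p - 1)) [:a ^ 2 - b:] 0" using cong_p_pow_imp_pi_pow[of 1] by simp
  have "u ^ 2 - [:b:] = [:a ^ 2 - b:] + x * ([:2 * a:] + x)"
  proof -
    have e1: "[:a ^ 2 - b:] = [:a:] * [:a:] - [:b:]" by (simp add: power2_eq_square)
    have e2: "[:2 * a:] = [:a:] + [:a:]" by simp
    show ?thesis unfolding x_def e1 e2 by algebra
  qed
  then have "cong_z p (piz ^ (p - 1)) ([:a ^ 2 - b:] + x * ([:2 * a:] + x)) 0"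
    using u2b cong_z_iff_0 by metis
  from cong_z_diff[OF this ab] have "cong_z p (piz ^ (p - 1)) (([:2 * a:] + x) * x) 0"
    by (simp add: ac_simps)
  moreover have "\<not> cong_z p piz ([:2 * a:] + x) 0"
  proof
    assume "cong_z p piz ([:2 * a:] + x) 0"
    then have d1: "int p dvd 2 * a + poly x 1" unfolding cong_z_pi_iff by simp
    have "cong_z p piz x 0" using pi_pow_mono[of 1 2] x2 by simp
    then have "int p dvd poly x 1" unfolding cong_z_pi_iff .
    with d1 have "int p dvd 2 * a" using dvd_add_left_iff by blast
    then show False using pa int_p_dvd_2_times by blast
  qed
  ultimately have "cong_z p (piz ^ (p - 1)) x 0" using pi_unit_cancel by blast
  then show ?thesis unfolding x_def using cong_z_iff_0 by blast
qed

text \<open>A real multiple p y of p is congruent to p c, c = y(1) \<in> Z, modulo p pi^2 = pi^(p+1):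
  y is real, so y - c is real and divisible by pi, hence by pi^2.\<close>

lemma real_multiple_of_p:
  assumes xreal: "cong_z p 0 (conjz p x) x" and xp: "cong_z p [:int p:] x 0"
  shows "\<exists>c. cong_z p (piz ^ (p + 1)) x [:int p * c:]"
proof -
  obtain y where xy: "cong_z p 0 x ([:int p:] * y)" using xp cong_z_0_iff_multiple by blast
  have "cong_z p 0 (conjz p x) ([:int p:] * conjz p y)"
    using sigma_cong_z0[OF not_dvd_p_minus_1 xy] by (simp add: conjz_sigma sigma_mult)
  then have "cong_z p 0 ([:int p:] * conjz p y) ([:int p:] * y)"
    using xreal xy cong_z_sym cong_z_trans by blast
  then have "cong_z p 0 ([:int p:] * (conjz p y - y)) 0"
    using cong_z_iff_0 by (simp add: algebra_simps)
  then have yreal: "cong_z p 0 (conjz p y) y" using cancel_p cong_z_iff_0 by blast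
  define c where "c = poly y 1"
  define t where "t = y - [:c:]"
  have t1: "cong_z p piz t 0" unfolding t_def c_def using cong_z_pi_const cong_z_iff_0 by blast
  have treal: "cong_z p 0 (conjz p t) t"
    unfolding t_def using cong_z_diff[OF yreal cong_z_refl, of "[:c:]"]
      by (simp add: conjz_sigma sigma_diff)
  have "cong_z p (piz ^ (p - 1) * piz ^ 2) ([:int p:] * t) 0"
    using cong_z_mult0[OF pi_pow_p_minus_1_dvd_p real_pi_dvd_imp_pi2[OF treal t1]] .
  moreover have "p - 1 + 2 = p + 1" using p_ge3 by simp
  ultimately have pt: "cong_z p (piz ^ (p + 1)) ([:int p:] * t) 0" by (metis power_add)
  have "cong_z p 0 (x - [:int p * c:]) ([:int p:] * t)"
    using cong_z_diff[OF xy cong_z_refl, of "[:int p * c:]"]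
      unfolding t_def by (simp add: algebra_simps)
  then have "cong_z p (piz ^ (p + 1)) (x - [:int p * c:]) 0"
    using pt cong_z_congr0 cong_z_sym by blast
  then show ?thesis using cong_z_iff_0 by blast
qed

lemma real_unit_cong_integer:
  assumes ua: "cong_z p (piz ^ 2) u [:a:]" and pa: "\<not> int p dvd a"
    and nb: "cong_z p [:int p:] (normz p u) [:b:]" and real: "cong_z p 0 (conjz p u) u"
  shows "\<exists>c. cong_z p (piz ^ (p + 1)) u [:a + int p * c:]"
proof -
  have "cong_z p 0 (normz p u) (u ^ 2)"
    unfolding normz_def power2_eq_square using cong_z_mult_left[OF real] .
  then have "cong_z p [:int p:] (u ^ 2) [:b:]"
    using nb cong_z_0_imp cong_z_sym cong_z_trans by blast
  then have "cong_z p (piz ^ (p - 1)) (u ^ 2) [:b:]" using cong_p_pow_imp_pi_pow[of 1] by simp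
  then have "cong_z p (piz ^ (p - 1)) u [:a:]" by (rule unit_cong_mod_p[OF ua pa])
  then have "cong_z p (piz ^ (p - 1)) (u - [:a:]) 0" using cong_z_iff_0 by blast
  then have "cong_z p [:int p:] (u - [:a:]) 0" using cong_pi_pow_imp_p_pow[of 1] by simp
  moreover have "cong_z p 0 (conjz p (u - [:a:])) (u - [:a:])"
    using cong_z_diff[OF real cong_z_refl, of "[:a:]"] by (simp add: conjz_sigma sigma_diff)
  ultimately obtain c where "cong_z p (piz ^ (p + 1)) (u - [:a:]) [:int p * c:]"
    using real_multiple_of_p by blast
  moreover have "u - [:a + int p * c:] = (u - [:a:]) - [:int p * c:]" by simp
  ultimately show ?thesis using cong_z_iff_0 by metis
qed

lemma fermat_nat: "[int n ^ p = int n] (mod int p)"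
proof (induction n)
  case 0 then show ?case using p_gt0 by (simp add: zero_power)
next
  case (Suc n)
  obtain W :: int where W: "(1 + int n) ^ p = 1 + of_nat p * int n + of_nat p * (int n)^2 * W + int n ^ p"
    using binom_p[OF pr p_ge3] by blast
  have "[(1 + int n) ^ p = 1 + int n ^ p] (mod int p)"
    unfolding W by (simp add: cong_iff_dvd_diff)
  also have "[1 + int n ^ p = 1 + int n] (mod int p)" using Suc.IH by (intro cong_add) auto
  finally show ?case by (simp add: add.commute)
qed

lemma fermat_int: "\<not> int p dvd e \<Longrightarrow> [e ^ (p - 1) = 1] (mod int p)"
proof -
  assume nd: "\<not> int p dvd e"
  define n where "n = nat (e mod int p)"
  have en: "[e = int n] (mod int p)" unfolding n_def using p_gt0 by (simp add: cong_def)
  have "[e ^ p = e] (mod int p)"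
    using cong_trans[OF cong_trans[OF cong_pow[OF en] fermat_nat] cong_sym[OF en]] .
  then have "[e * e ^ (p - 1) = e * 1] (mod int p)"
    by (metis power_Suc Suc_pred' p_gt0 mult_1_right)
  moreover have "coprime e (int p)" using nd pr
    by (metis coprime_commute prime_imp_coprime prime_nat_int_transfer)
  ultimately show ?thesis using cong_mult_lcancel by blast
qed

lemma mult_mod_bij: "0 < k \<Longrightarrow> k < p \<Longrightarrow> bij_betw (\<lambda>j. (k * j) mod p) {1..<p} {1..<p}"
proof -
  assume k: "0 < k" "k < p"
  let ?h = "\<lambda>j. (k * j) mod p"
  have sub: "?h ` {1..<p} \<subseteq> {1..<p}"
  proof
    fix x assume "x \<in> ?h ` {1..<p}"
    then obtain j where j: "j \<in> {1..<p}" "x = (k * j) mod p" by auto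
    have "\<not> p dvd (k * j)" using not_dvd_mult[OF not_dvd_below_p not_dvd_below_p] j k by auto
    then have "x \<noteq> 0" using j by (simp add: dvd_eq_mod_eq_0)
    moreover have "x < p" using j p_gt0 by simp
    ultimately show "x \<in> {1..<p}" by auto
  qed
  have inj: "inj_on ?h {1..<p}"
  proof (rule inj_onI)
    fix i j assume ij: "i \<in> {1..<p}" "j \<in> {1..<p}" "?h i = ?h j"
    then have "[k * i = k * j] (mod p)" by (simp add: cong_def)
    moreover have "coprime k p"
      using pr not_dvd_below_p[OF k] by (metis coprime_commute prime_imp_coprime)
    ultimately have "[i = j] (mod p)" using cong_mult_lcancel_nat by blast
    then show "i = j" using ij by (simp add: cong_def)
  qed
  have "?h ` {1..<p} = {1..<p}" using endo_inj_surj[OF _ sub inj] by simp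
  then show ?thesis using inj unfolding bij_betw_def by simp
qed

lemma prod_reindex_mult:
  assumes "0 < k" "k < p"
  shows "(\<Prod>j\<in>{1..<p}. g (zeta ^ (k * j))) = (\<Prod>j\<in>{1..<p}. g (zeta ^ j))"
proof -
  have "(\<Prod>j\<in>{1..<p}. g (zeta ^ (k * j))) = (\<Prod>j\<in>{1..<p}. g (zeta ^ ((k * j) mod p)))"
    using zeta_pow_mod by simp
  also have "\<dots> = (\<Prod>j\<in>{1..<p}. g (zeta ^ j))"
    using prod.reindex_bij_betw[OF mult_mod_bij[OF assms], of "\<lambda>j. g (zeta ^ j)"] by simp
  finally show ?thesis .
qed

lemma constant_embeddings_integer:
  assumes "\<And>k. 0 < k \<Longrightarrow> k < p \<Longrightarrow> evalc (zeta ^ k) f = c"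
  shows "\<exists>n. cong_z p 0 f [:n:] \<and> c = of_int n"
proof -
  obtain q r where qr: "f = q * Phi + r" "degree r < p - 1" using reduce by blast
  have "map_poly (of_int :: int \<Rightarrow> complex) r - [:c:] = 0"
  proof (rule poly_vanishing_at_zeta_powers)
    have "degree (map_poly (of_int :: int \<Rightarrow> complex) r - [:c:])
        \<le> max (degree (map_poly (of_int :: int \<Rightarrow> complex) r)) (degree [:c:])"
      by (rule degree_diff_le_max)
    then show "degree (map_poly (of_int :: int \<Rightarrow> complex) r - [:c:]) < p - 1"
      using qr(2) p_ge3 by (simp add: degree_map_poly)
  next
    fix k :: nat assume k: "0 < k" "k < p"
    have "evalc (zeta ^ k) r = c"
      using assms[OF k] qr(1) evalc_cyclo[OF not_dvd_below_p[OF k]] by simp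
    then show "poly (map_poly of_int r - [:c:]) (zeta ^ k) = 0" by (simp add: evalc_def)
  qed
  then have mr: "map_poly (of_int :: int \<Rightarrow> complex) r = [:c:]" by simp
  have "coeff r i = 0" if "i > 0" for i
  proof -
    have "coeff (map_poly (of_int :: int \<Rightarrow> complex) r) i = 0"
      using mr that by (simp add: coeff_pCons split: nat.splits)
    then show ?thesis by (simp add: coeff_map_poly)
  qed
  then have r: "r = [:coeff r 0:]" by (intro poly_eqI) (auto simp: coeff_pCons split: nat.splits)
  have "c = of_int (coeff r 0)"
    using arg_cong[OF mr, of "\<lambda>P. coeff P 0"] by (simp add: coeff_map_poly)
  moreover have "cong_z p 0 f [:coeff r 0:]"
  proof -
    have "f - [:coeff r 0:] = 0 * 0 + q * Phi"
      using qr(1) r by (metis add_diff_cancel_right' mult_zero_left add_0)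
    then show ?thesis unfolding cong_z_def by blast
  qed
  ultimately show ?thesis by blast
qed

text \<open>All embeddings of the absolute norm prod_j sigma_j(f) equal the product of the
  embeddings of f, because k * j runs through all nonzero residues with j.\<close>

lemma evalc_galois_norm:
  assumes "0 < k" "k < p"
  shows "evalc (zeta ^ k) (\<Prod>j\<in>{1..<p}. sigma j f) = (\<Prod>j\<in>{1..<p}. evalc (zeta ^ j) f)"
proof -
  have "evalc (zeta ^ k) (\<Prod>j\<in>{1..<p}. sigma j f) = (\<Prod>j\<in>{1..<p}. evalc (zeta ^ (k * j)) f)"
    by (simp add: evalc_prod evalc_sigma power_mult)
  then show ?thesis using prod_reindex_mult[OF assms, of "\<lambda>z. evalc z f"] by simp
qed

lemma galois_norm_of_unit:
  assumes uv: "cong_z p 0 (u * v) 1"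
  shows "\<exists>N. cong_z p 0 (\<Prod>j\<in>{1..<p}. sigma j u) [:N:] \<and> (N = 1 \<or> N = -1)"
proof -
  obtain N1 where N1: "cong_z p 0 (\<Prod>j\<in>{1..<p}. sigma j u) [:N1:]"
      "(\<Prod>j\<in>{1..<p}. evalc (zeta ^ j) u) = of_int N1"
    using constant_embeddings_integer[OF evalc_galois_norm] by blast
  obtain N2 where N2: "(\<Prod>j\<in>{1..<p}. evalc (zeta ^ j) v) = of_int N2"
    using constant_embeddings_integer[OF evalc_galois_norm] by blast
  have "(\<Prod>j\<in>{1..<p}. evalc (zeta ^ j) u) * (\<Prod>j\<in>{1..<p}. evalc (zeta ^ j) v) = (\<Prod>j\<in>{1..<p}. 1)"
    unfolding prod.distrib[symmetric] using evalc_unit[OF uv] by (intro prod.cong) auto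
  then have "of_int (N1 * N2) = (1 :: complex)" using N1(2) N2 by simp
  then have "N1 * N2 = 1" by (metis of_int_1 of_int_eq_iff)
  then have "N1 = 1 \<or> N1 = -1" by (simp add: zmult_eq_1_iff) (metis zmult_eq_1_iff)
  then show ?thesis using N1(1) by blast
qed

text \<open>Step (3): comparing the norm +-1 with e^(p-1) modulo pi^(p+1) gives e^(p-1) = 1 (mod p^2).\<close>
lemma unit_cong_integer_fermat:
  assumes uv: "cong_z p 0 (u * v) 1" and ue: "cong_z p (piz ^ (p + 1)) u [:e:]"
    and pe: "\<not> int p dvd e"
  shows "[e ^ (p - 1) = 1] (mod (int p ^ 2))"
proof -
  obtain N where N: "cong_z p 0 (\<Prod>j\<in>{1..<p}. sigma j u) [:N:]" "N = 1 \<or> N = -1"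
    using galois_norm_of_unit[OF uv] by blast
  have "cong_z p (piz ^ (p + 1)) (\<Prod>j\<in>{1..<p}. sigma j u) (\<Prod>j\<in>{1..<p}. [:e:])"
    using sigma_cong_z_pi[OF not_dvd_below_p ue] by (intro cong_z_prod) (metis sigma_const atLeastLessThan_iff
        less_le_trans zero_less_one le_less_trans)
  then have "cong_z p (piz ^ (p + 1)) (\<Prod>j\<in>{1..<p}. sigma j u) [:e ^ (p - 1):]"
    by (simp add: poly_const_pow)
  then have "cong_z p (piz ^ (p + 1)) [:N:] [:e ^ (p - 1):]"
    using cong_z_0_imp[OF N(1)] cong_z_sym cong_z_trans by blast
  then have "cong_z p (piz ^ (p + 1)) ([:N:] - [:e ^ (p - 1):]) 0" using cong_z_iff_0 by blast
  then have d2: "int p ^ 2 dvd N - e ^ (p - 1)" by (intro int_cong_pi_pow_p1) simp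
  then have "int p dvd N - e ^ (p - 1)" by (rule dvd_trans[rotated]) simp
  moreover have "int p dvd e ^ (p - 1) - 1"
    using fermat_int[OF pe] by (simp add: cong_iff_dvd_diff dvd_diff_commute)
  ultimately have dN: "int p dvd N - 1" using dvd_add by fastforce
  have "N \<noteq> -1"
  proof
    assume "N = -1"
    with dN have "int p dvd 2 * 1" by simp
    then show False using int_p_dvd_2_times[of 1] p_ge3 by simp
  qed
  then have "N = 1" using N(2) by blast
  then show ?thesis using d2 by (simp add: cong_iff_dvd_diff dvd_diff_commute)
qed

text \<open>Step (4), Hensel lifting.  A multiple of pi^(p-1+s) is p times a multiple of pi^s,
  because p (pi W - 1) = pi^(p-1) modulo Phi_p.\<close>

lemma divide_pi_pow_by_p:
  "\<exists>z. cong_z p 0 ([:int p:] * z) (piz ^ (p - 1 + s) * x) \<and> cong_z p (piz ^ s) z 0"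
proof -
  define z where "z = piz ^ s * ((piz * cyclo_W - 1) * x)"
  have "cong_z p 0 ([:int p:] * (piz * cyclo_W - 1) * (piz ^ s * x)) (piz ^ (p - 1) * (piz ^ s * x))"
    by (rule cong_z_mult[OF cong_z_sym[OF pi_pow_p_minus_1_eq] cong_z_refl])
  moreover have "[:int p:] * (piz * cyclo_W - 1) * (piz ^ s * x) = [:int p:] * z"
    unfolding z_def by (simp add: ac_simps)
  moreover have "piz ^ (p - 1) * (piz ^ s * x) = piz ^ (p - 1 + s) * x"
    by (simp add: power_add mult.assoc)
  moreover have "cong_z p (piz ^ s) z 0" unfolding z_def by simp
  ultimately show ?thesis by metis
qed

text \<open>If y^p = u (mod pi^k), k \<ge> p + 1, then y' = y (1 + z) with p z = (u - y^p) u^(-1)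
  solves y'^p = u (mod pi^(k+1)), and y' = y (mod pi^(k-p+1)).\<close>

lemma hensel_step:
  assumes uv: "cong_z p 0 (u * v) 1" and k: "k \<ge> p + 1" and y: "cong_z p (piz ^ k) (y ^ p) u"
  shows "\<exists>y'. cong_z p (piz ^ Suc k) (y' ^ p) u \<and> cong_z p (piz ^ (k - p + 1)) y' y"
proof -
  define s where "s = k - p + 1"
  have s2: "s \<ge> 2" and ks: "p - 1 + s = k" using k p_ge3 unfolding s_def by simp_all
  have "cong_z p (piz ^ k) (u - y ^ p) 0" using y cong_z_sym cong_z_iff_0 by blast
  then obtain d where d: "cong_z p 0 (u - y ^ p) (piz ^ k * d)" using cong_z_0_iff_multiple by blast
  obtain z where z: "cong_z p 0 ([:int p:] * z) (piz ^ k * (v * d))" and zs: "cong_z p (piz ^ s) z 0"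
    using divide_pi_pow_by_p[of s "v * d"] unfolding ks by blast
  define y' where "y' = y * (1 + z)"
  have E: "y' ^ p - u = y ^ p * ((1 + z) ^ p - 1 - [:int p:] * z) + (y ^ p * ([:int p:] * z) - (u - y ^ p))"
    unfolding y'_def power_mult_distrib by (simp add: algebra_simps)
  have "p + s = Suc k" using ks p_gt0 by linarith
  then have tail: "cong_z p (piz ^ Suc k) (y ^ p * ((1 + z) ^ p - 1 - [:int p:] * z)) 0"
    using cong_z_mult_left[OF binom_p_tail[OF zs s2], of "y ^ p"] by simp
  have "cong_z p 0 (y ^ p * ([:int p:] * z) - (u - y ^ p)) (y ^ p * (piz ^ k * (v * d)) - piz ^ k * d)"
    by (rule cong_z_diff[OF cong_z_mult_left[OF z] d])
  moreover have "y ^ p * (piz ^ k * (v * d)) - piz ^ k * d = (y ^ p * v - 1) * (piz ^ k * d)"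
    by (simp add: algebra_simps)
  moreover have "cong_z p (piz ^ k * piz ^ k) ((y ^ p * v - 1) * (piz ^ k * d)) 0"
  proof (rule cong_z_mult0)
    have "cong_z p (piz ^ k) (y ^ p * v) (u * v)" by (rule cong_z_mult[OF y cong_z_refl])
    then show "cong_z p (piz ^ k) (y ^ p * v - 1) 0"
      using cong_z_0_imp[OF uv] cong_z_trans cong_z_iff_0 by blast
  qed simp
  moreover have "Suc k \<le> k + k" using k by simp
  ultimately have main: "cong_z p (piz ^ Suc k) (y ^ p * ([:int p:] * z) - (u - y ^ p)) 0"
    using pi_pow_mono[of "Suc k" "k + k"] cong_z_congr0 cong_z_sym by (metis power_add)
  have "cong_z p (piz ^ Suc k) (y' ^ p - u) 0" unfolding E using cong_z_add[OF tail main] by simp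
  moreover have "cong_z p (piz ^ s) (y' - y) 0"
    using cong_z_mult_left[OF zs, of y] unfolding y'_def by (simp add: algebra_simps)
  ultimately show ?thesis using cong_z_iff_0 unfolding s_def by blast
qed

lemma hensel_sequence:
  assumes uv: "cong_z p 0 (u * v) 1" and y0: "cong_z p (piz ^ (p + 1)) (y0 ^ p) u"
  shows "\<exists>Y. (\<forall>i. cong_z p (piz ^ (p + 1 + i)) (Y i ^ p) u)
           \<and> (\<forall>i j. i \<le> j \<longrightarrow> cong_z p (piz ^ (i + 2)) (Y j) (Y i))"
proof -
  have "\<exists>y'. cong_z p (piz ^ (p + 1 + i)) (y ^ p) u \<longrightarrow>
          cong_z p (piz ^ (p + 1 + Suc i)) (y' ^ p) u \<and> cong_z p (piz ^ (i + 2)) y' y" for i y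
    using hensel_step[OF uv, of "p + 1 + i" y] by auto
  then obtain f where f: "\<And>i y. cong_z p (piz ^ (p + 1 + i)) (y ^ p) u \<Longrightarrow>
      cong_z p (piz ^ (p + 1 + Suc i)) (f i y ^ p) u \<and> cong_z p (piz ^ (i + 2)) (f i y) y"
    by metis
  define Y where "Y = rec_nat y0 f"
  have Y0: "Y 0 = y0" and YS: "Y (Suc i) = f i (Y i)" for i by (simp_all add: Y_def)
  have Y: "cong_z p (piz ^ (p + 1 + i)) (Y i ^ p) u" for i
  proof (induction i)
    case 0
    show ?case using y0 by (simp add: Y0)
  next
    case (Suc i)
    show ?case using f[OF Suc.IH] by (simp add: YS)
  qed
  have Ystep: "cong_z p (piz ^ (i + 2)) (Y (Suc i)) (Y i)" for i
    using f[OF Y[of i]] by (simp add: YS)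
  have "cong_z p (piz ^ (i + 2)) (Y j) (Y i)" if "i \<le> j" for i j
    using that
  proof (induction j rule: dec_induct)
    case (step j)
    have "cong_z p (piz ^ (i + 2)) (Y (Suc j)) (Y j)"
      using pi_pow_mono[of "i + 2" "j + 2"] step.hyps(1) Ystep[of j] by simp
    then show ?case using step.IH cong_z_trans by blast
  qed simp
  then show ?thesis using Y by blast
qed

lemma p_adic_root_sequence:
  assumes uv: "cong_z p 0 (u * v) 1" and y0: "cong_z p (piz ^ (p + 1)) (y0 ^ p) u"
  shows "\<exists>y. (\<forall>n. cong_z p [:int p ^ n:] (y n ^ p) u)
           \<and> (\<forall>n. cong_z p [:int p ^ n:] (y (Suc n)) (y n))"
proof -
  obtain Y where Y1: "\<And>i. cong_z p (piz ^ (p + 1 + i)) (Y i ^ p) u"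
    and Y2: "\<And>i j. i \<le> j \<Longrightarrow> cong_z p (piz ^ (i + 2)) (Y j) (Y i)"
    using hensel_sequence[OF uv y0] by blast
  have "cong_z p [:int p ^ n:] (Y ((p - 1) * n) ^ p) u" for n
    using cong_pi_pow_imp_p_pow pi_pow_mono[OF _ Y1[of "(p - 1) * n"], of "(p - 1) * n"] by simp
  moreover have "cong_z p [:int p ^ n:] (Y ((p - 1) * Suc n)) (Y ((p - 1) * n))" for n
    using cong_pi_pow_imp_p_pow pi_pow_mono[OF _ Y2[of "(p - 1) * n" "(p - 1) * Suc n"], of "(p - 1) * n"]
      by simp
  ultimately show ?thesis by (intro exI[of _ "\<lambda>n. Y ((p - 1) * n)"]) simp
qed

text \<open>A p-adically convergent sequence of p-th roots of the unit u is a unit of o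
  (with inverse y^(p-1) u^(-1)) whose p-th power is u.\<close>

lemma pth_power_unit_of_root_sequence:
  assumes uv: "cong_z p 0 (u * v) 1"
    and ypow: "\<And>n. cong_z p [:int p ^ n:] (y n ^ p) u"
    and ystep: "\<And>n. cong_z p [:int p ^ n:] (y (Suc n)) (y n)"
  shows "o_pth_power_unit p (\<lambda>n. u)"
proof -
  define z where "z = (\<lambda>n. y n ^ (p - 1) * v)"
  have yo: "o_elem p y" unfolding o_elem_def zcong_cong_z using ystep by simp
  have zo: "o_elem p z" unfolding o_elem_def zcong_cong_z z_def
    using cong_z_mult[OF cong_z_power[OF ystep] cong_z_refl] by blast
  have yz: "o_eq p (\<lambda>n. y n * z n) (\<lambda>n. 1)" unfolding o_eq_def zcong_cong_z
  proof
    fix n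
    have "y n ^ p = y n * y n ^ (p - 1)" using power_Suc[of "y n" "p - 1"] p_gt0 by simp
    then have "y n * z n = y n ^ p * v" unfolding z_def by (simp add: mult.assoc)
    moreover have "cong_z p [:int p ^ n:] (y n ^ p * v) (u * v)"
      by (rule cong_z_mult[OF ypow cong_z_refl])
    ultimately show "cong_z p [:int p ^ n:] (y n * z n) 1"
      using cong_z_trans cong_z_0_imp[OF uv] by simp
  qed
  have "o_unit p y" unfolding o_unit_def using yo zo yz by blast
  moreover have "o_eq p (\<lambda>n. y n ^ p) (\<lambda>n. u)"
    unfolding o_eq_def zcong_cong_z using ypow by simp
  ultimately show ?thesis unfolding o_pth_power_unit_def by blast
qed

text \<open>The integer e with e^(p-1) = 1 (mod p^2) starts the lifting: e^p = e = u (mod pi^(p+1)).\<close>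
lemma integer_pth_power_start:
  assumes ue: "cong_z p (piz ^ (p + 1)) u [:e:]" and e2: "[e ^ (p - 1) = 1] (mod (int p ^ 2))"
  shows "cong_z p (piz ^ (p + 1)) ([:e:] ^ p) u"
proof -
  have "e ^ p = e * e ^ (p - 1)" using power_Suc[of e "p - 1"] p_gt0 by simp
  then have "e ^ p - e = e * (e ^ (p - 1) - 1)" by (simp add: algebra_simps)
  moreover have "int p ^ 2 dvd e * (e ^ (p - 1) - 1)"
    using e2 by (simp add: cong_iff_dvd_diff dvd_diff_commute)
  ultimately obtain m where m: "e ^ p - e = int p ^ 2 * m" by (auto elim: dvdE)
  have "cong_z p [:int p ^ 2:] ([:e:] ^ p - [:e:]) 0"
    using cong_z_multiple[of p "[:int p ^ 2:]" "[:m:]"] m by (simp add: poly_const_pow mult.commute)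
  then have "cong_z p (piz ^ ((p - 1) * 2)) ([:e:] ^ p) [:e:]"
    using cong_p_pow_imp_pi_pow[of 2] cong_z_iff_0 by blast
  then have "cong_z p (piz ^ (p + 1)) ([:e:] ^ p) [:e:]"
    using pi_pow_mono[of "p + 1" "(p - 1) * 2"] p_ge3 by simp
  then show ?thesis using ue cong_z_sym cong_z_trans by blast
qed

lemma Zp_unit_not_dvd:
  assumes "Zp_unit p a"
  shows "\<not> int p dvd a 1"
proof
  assume d: "int p dvd a 1"
  obtain a' where "\<forall>n. [a n * a' n = 1] (mod (int p ^ n))"
    using assms unfolding Zp_unit_def by blast
  then have "[a 1 * a' 1 = 1] (mod int p)" by (metis power_one_right)
  moreover have "int p dvd a 1 * a' 1" using d by simp
  ultimately have "int p dvd 1" by (metis cong_dvd_iff)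
  then show False using p_ge3 by simp
qed

end

lemma o_cong_const_level1:
  assumes "o_cong p d (\<lambda>n. x) y" and "cong_z p d [:int p:] 0"
  shows "cong_z p d x (y 1)"
proof -
  obtain z where "o_eq p (\<lambda>n. x - y n) (\<lambda>n. d * z n)"
    using assms(1) unfolding o_cong_def by blast
  then have "cong_z p [:int p:] (x - y 1) (d * z 1)"
    unfolding o_eq_def zcong_cong_z by (metis power_one_right)
  then have "cong_z p d (x - y 1) (d * z 1)" by (rule cong_z_modulus_dvd[OF assms(2)])
  then have "cong_z p d (x - y 1) 0" using cong_z_trans cong_z_multiple by blast
  then show ?thesis using cong_z_iff_0 by blast
qed

theorem proposition6:
  fixes p :: nat and u :: "int poly"
  assumes "prime p" and "odd p"
    and "zunit p u"
    and "\<exists>a. Zp_unit p a \<and> o_cong p (piz ^ 2) (\<lambda>n. u) (\<lambda>n. [:a n:])"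
    and "\<exists>b. Zp_unit p b \<and> o_cong p [:int p:] (\<lambda>n. normz p u) (\<lambda>n. [:b n:])"
  shows "o_pth_power_unit p (\<lambda>n. u)"
proof -
  interpret cyclotomic p using assms(1,2) by unfold_locales
  obtain v where uv: "cong_z p 0 (u * v) 1" using assms(3) unfolding zunit_def zeq_cong_z by blast
  obtain a where a: "Zp_unit p a" "o_cong p (piz ^ 2) (\<lambda>n. u) (\<lambda>n. [:a n:])"
    using assms(4) by blast
  obtain b where b: "o_cong p [:int p:] (\<lambda>n. normz p u) (\<lambda>n. [:b n:])"
    using assms(5) by blast
  have "cong_z p (piz ^ 2) [:int p:] 0"
    using pi_pow_mono[OF _ pi_pow_p_minus_1_dvd_p, of 2] p_ge3 by simp
  then have ua: "cong_z p (piz ^ 2) u [:a 1:]" using o_cong_const_level1[OF a(2)] by simp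
  have nb: "cong_z p [:int p:] (normz p u) [:b 1:]"
    using o_cong_const_level1[OF b] cong_z_multiple[of p "[:int p:]" 1] by simp
  have pa: "\<not> int p dvd a 1" by (rule Zp_unit_not_dvd[OF a(1)])
  have real: "cong_z p 0 (conjz p u) u" by (rule unit_cong_integer_is_real[OF uv ua])
  obtain c where ue: "cong_z p (piz ^ (p + 1)) u [:a 1 + int p * c:]"
    using real_unit_cong_integer[OF ua pa nb real] by blast
  have "\<not> int p dvd (a 1 + int p * c)" using pa by (simp add: dvd_add_left_iff)
  then have "[(a 1 + int p * c) ^ (p - 1) = 1] (mod (int p ^ 2))"
    by (rule unit_cong_integer_fermat[OF uv ue])
  then have "cong_z p (piz ^ (p + 1)) ([:a 1 + int p * c:] ^ p) u"
    by (rule integer_pth_power_start[OF ue])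
  then obtain y where "\<And>n. cong_z p [:int p ^ n:] (y n ^ p) u"
      and "\<And>n. cong_z p [:int p ^ n:] (y (Suc n)) (y n)"
    using p_adic_root_sequence[OF uv] by blast
  then show ?thesis using pth_power_unit_of_root_sequence[OF uv] by blast
qed

end
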